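(* Let $h=h(u,v)$ be smooth with $h_{uu}h_{vv}>0$, and consider the hyperbolic system $u_t=h_{uv}u_x+h_{vv}v_x$, $v_t=h_{uu}u_x+h_{uv}v_x$, written in Riemann invariants $r=(r_+,r_-)$ as $$\partial_t r_+=\lambda_+(r)\partial_x r_+,\qquad \partial_t r_-=\lambda_-(r)\partial_x r_-,\qquad \lambda_\pm=h_{uv}\pm\sqrt{h_{uu}h_{vv}}.$$ Let $r_\pm(x,t)$ be a generic solution (in the sense of the context) given for $t<t_0$ by the hodograph equations $x+\lambda_\pm(r)t=\mu_\pm(r)$, having a generic gradient catastrophe of $r_-$ at $(x_0,t_0)$ with limiting values $r^0_\pm$. Put $x_\pm=x-x_0+\lambda^0_\pm(t-t_0)$ and let $\bar r_\pm(x_+,x_-)=r_\pm-r^0_\pm$, regarded as functions of $(x_+,x_-)$. Then, for sufficiently small $|X_\pm|$ satisfying $\frac{X_+-X_-}{\lambda^0_+-\lambda^0_-}<0$, the limits $$R_+(X_+,X_-)=\lim_{k\to0}k^{-2/3}\bar r_+(k^{2/3}X_+,kX_-),\qquad R_-(X_+,X_-)=\lim_{k\to0}k^{-1/3}\bar r_-(k^{2/3}X_+,kX_-)$$ exist and satisfy $$X_+=\alpha R_+,\qquad X_-=\beta X_+R_--\tfrac16\gamma R_-^3,$$ where $$\alpha=\mu^0_{+,+}-t_0\lambda^0_{+,+},\qquad \beta=-\frac{\lambda^0_{-,-}}{\lambda^0_+-\lambda^0_-},\qquad \gamma=-\mu^0_{-,---}+t_0\lambda^0_{-,---}.$$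
   Context: Riemann invariants: $r_\pm=r_\pm(u,v)$ with $dr_\pm=\kappa_\pm(\pm\sqrt{h_{uu}}\,du+\sqrt{h_{vv}}\,dv)$ for nonvanishing integrating factors $\kappa_\pm$. Notation: for a function $g(r_+,r_-)$, $g_{\pm,\dots}$ denotes partial derivatives with respect to the Riemann invariants after the comma, e.g. $\lambda_{-,--}=\partial^2\lambda_-/\partial r_-^2$, $\mu_{+,+}=\partial\mu_+/\partial r_+$; a superscript $0$ means evaluation at $r^0=(r^0_+,r^0_-)$, the value of the solution at $(x_0,t_0)$, and $\lambda^0_\pm=\lambda_\pm(r^0)$. Hodograph form: the solution satisfies $x+\lambda_\pm(r)t=\mu_\pm(r)$, where $\mu_\pm$ satisfy $\frac{\partial\mu_+}{\partial r_-}=\frac{\mu_+-\mu_-}{\lambda_+-\lambda_-}\frac{\partial\lambda_+}{\partial r_-}$, $\frac{\partial\mu_-}{\partial r_+}=\frac{\mu_+-\mu_-}{\lambda_+-\lambda_-}\frac{\partial\lambda_-}{\partial r_+}$. Gradient catastrophe of $r_-$ at $(x_0,t_0)$: $\partial_xr_-\to\infty$ while $\partial_xr_+$ stays bounded as $(x,t)\to(x_0,t_0)$; it is characterized by $\mu^0_{-,-}-t_0\lambda^0_{-,-}=0$ and $\mu^0_{-,--}-t_0\lambda^0_{-,--}=0$. Genericity: $\lambda^0_{-,-}\neq0$, the graph of $r_-(x,t_0)$ has a nondegenerate inflection point at $x_0$, and $\mu^0_{+,+}-t_0\lambda^0_{+,+}\neq0$, $\mu^0_{-,---}-t_0\lambda^0_{-,---}\neq0$.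 *)

theory Defs
  imports "HOL-Analysis.Analysis"
begin

text \<open>Functions of two real variables are written curried: f :: real \<Rightarrow> real \<Rightarrow> real.
  For functions of the Riemann invariants, the first argument is r_+ and the second r_-.\<close>

definition pd1 :: "(real \<Rightarrow> real \<Rightarrow> real) \<Rightarrow> real \<Rightarrow> real \<Rightarrow> real" where
  "pd1 f a b = deriv (\<lambda>x. f x b) a"

definition pd2 :: "(real \<Rightarrow> real \<Rightarrow> real) \<Rightarrow> real \<Rightarrow> real \<Rightarrow> real" where
  "pd2 f a b = deriv (\<lambda>y. f a y) b"

fun pds :: "bool list \<Rightarrow> (real \<Rightarrow> real \<Rightarrow> real) \<Rightarrow> real \<Rightarrow> real \<Rightarrow> real" where
  "pds [] f = f"
| "pds (d # ds) f = (if d then pd2 else pd1) (pds ds f)"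

definition smooth_on :: "(real \<times> real) set \<Rightarrow> (real \<Rightarrow> real \<Rightarrow> real) \<Rightarrow> bool" where
  "smooth_on S f \<longleftrightarrow>
     (\<forall>ds. continuous_on S (\<lambda>p. pds ds f (fst p) (snd p)) \<and>
       (\<forall>p\<in>S. (\<lambda>x. pds ds f x (snd p)) differentiable (at (fst p)) \<and>
               (\<lambda>y. pds ds f (fst p) y) differentiable (at (snd p))))"

text \<open>Passing from the characteristic coordinates (x_+, x_-) back to (x,t):
  x_\<pm> = x - x0 + lam0\<pm> (t - t0).\<close>
definition t_of :: "real \<Rightarrow> real \<Rightarrow> real \<Rightarrow> real \<Rightarrow> real \<Rightarrow> real" where
  "t_of lp0 lm0 t0 xp xm = t0 + (xp - xm) / (lp0 - lm0)"

definition x_of :: "real \<Rightarrow> real \<Rightarrow> real \<Rightarrow> real \<Rightarrow> real \<Rightarrow> real \<Rightarrow> real" where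
  "x_of lp0 lm0 x0 t0 xp xm = x0 + xp - lp0 * (t_of lp0 lm0 t0 xp xm - t0)"

end

theory Submission
  imports Defs "HOL-Homology.Invariance_of_Domain" "HOL-Computational_Algebra.Polynomial"
begin

text \<open>
  Put k = \<tau>^3, so that (x_+, x_-) = (\<tau>^2 Xp, \<tau>^3 Xm) runs into the catastrophe point from the past,
  and let a, b be the deviations of r_+, r_- from r0 along this curve. Subtracting the hodograph
  equations at (x0, t0) and expanding mu_\<pm> - t0 lambda_\<pm> by Taylor's formula at r0, the catastrophe
  conditions and the identities which the equations for mu_\<pm> force at r0 leave
  \<tau>^2 Xp = alpha a + (higher order) and \<tau>^3 Xm = -gamma/6 b^3 - lambda_{-,-} b (t - t0) + (higher order).
  A bootstrap gives a = O(\<tau>^2) and b = O(\<tau>); then a/\<tau>^2 tends to Xp/alpha, while the limiting cubic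
  evaluated at the continuous quantity b/\<tau> tends to Xm, which forces b/\<tau> to converge to one of its
  finitely many roots.
\<close>

section \<open>Smooth functions of two variables\<close>

lemma smooth_on_has_real_derivative_fst:
  assumes "smooth_on S f" "(x, y) \<in> S"
  shows "((\<lambda>x. pds ds f x y) has_real_derivative pds (False # ds) f x y) (at x)"
proof -
  have "(\<lambda>x. pds ds f x y) differentiable (at x)" using assms unfolding smooth_on_def by force
  then show ?thesis by (simp add: pd1_def DERIV_deriv_iff_real_differentiable)
qed

lemma smooth_on_has_real_derivative_snd:
  assumes "smooth_on S f" "(x, y) \<in> S"
  shows "((\<lambda>y. pds ds f x y) has_real_derivative pds (True # ds) f x y) (at y)"
proof -
  have "(\<lambda>y. pds ds f x y) differentiable (at y)" using assms unfolding smooth_on_def by force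
  then show ?thesis by (simp add: pd2_def DERIV_deriv_iff_real_differentiable)
qed

lemma smooth_on_isCont:
  assumes "smooth_on S f" "open S" "p \<in> S"
  shows "isCont (\<lambda>q. pds ds f (fst q) (snd q)) p"
  using assms unfolding smooth_on_def by (metis continuous_on_eq_continuous_at)

lemma smooth_on_continuous_on:
  assumes "smooth_on S f"
  shows "continuous_on S (\<lambda>q. f (fst q) (snd q))"
  using assms unfolding smooth_on_def by (metis pds.simps(1))

lemma smooth_on_continuous_on_compose:
  assumes "smooth_on U R" "smooth_on D u" "smooth_on D v" "\<forall>(x, t)\<in>D. (u x t, v x t) \<in> U"
  shows "continuous_on D (\<lambda>p. R (u (fst p) (snd p)) (v (fst p) (snd p)))"
proof -
  have "continuous_on D (\<lambda>p. (u (fst p) (snd p), v (fst p) (snd p)))"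
    using smooth_on_continuous_on[OF assms(2)] smooth_on_continuous_on[OF assms(3)]
    by (intro continuous_on_Pair)
  moreover have "(\<lambda>p. (u (fst p) (snd p), v (fst p) (snd p))) ` D \<subseteq> U"
    using assms(4) by force
  ultimately show ?thesis
    using continuous_on_compose2[OF smooth_on_continuous_on[OF assms(1)]] by fastforce
qed

lemma dist_Pair_le_abs_sum: "dist (x, y) (a, b) \<le> \<bar>x - a\<bar> + \<bar>y - b\<bar>" for x y a b :: real
proof -
  have "dist (x, y) (a, b) \<le> dist (x, y) (x, b) + dist (x, b) (a, b)" by (rule dist_triangle)
  also have "\<dots> = \<bar>y - b\<bar> + \<bar>x - a\<bar>" by (simp add: dist_Pair_Pair dist_real_def)
  finally show ?thesis by simp
qed

lemma MVT_between:
  fixes f f' :: "real \<Rightarrow> real"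
  assumes d: "\<And>t. \<bar>t - x\<bar> \<le> \<bar>y - x\<bar> \<Longrightarrow> (f has_real_derivative f' t) (at t)"
  shows "\<exists>\<xi>. \<bar>\<xi> - x\<bar> \<le> \<bar>y - x\<bar> \<and> f y - f x = (y - x) * f' \<xi>"
proof (cases x y rule: linorder_cases)
  case less
  from MVT2[OF less, of f f'] d less obtain z where "x < z" "z < y" "f y - f x = (y - x) * f' z"
    by (smt (verit))
  then show ?thesis by (intro exI[of _ z]) auto
next
  case equal then show ?thesis by (intro exI[of _ x]) auto
next
  case greater
  from MVT2[OF greater, of f f'] d greater obtain z where "y < z" "z < x" "f x - f y = (x - y) * f' z"
    by (smt (verit))
  then show ?thesis by (intro exI[of _ z]) (auto simp: algebra_simps)
qed

lemma abs_diff_le_by_deriv_bound: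
  fixes f f' :: "real \<Rightarrow> real"
  assumes d: "\<And>t. \<bar>t - x\<bar> \<le> \<bar>y - x\<bar> \<Longrightarrow> (f has_real_derivative f' t) (at t)"
    and M: "\<And>t. \<bar>t - x\<bar> \<le> \<bar>y - x\<bar> \<Longrightarrow> \<bar>f' t\<bar> \<le> M"
  shows "\<bar>f y - f x\<bar> \<le> M * \<bar>y - x\<bar>"
proof -
  from MVT_between[OF d] obtain \<xi> where "\<bar>\<xi> - x\<bar> \<le> \<bar>y - x\<bar>" "f y - f x = (y - x) * f' \<xi>" by blast
  then have "\<bar>f y - f x\<bar> = \<bar>y - x\<bar> * \<bar>f' \<xi>\<bar>" by (simp add: abs_mult)
  also have "\<dots> \<le> \<bar>y - x\<bar> * M" using M \<open>\<bar>\<xi> - x\<bar> \<le> \<bar>y - x\<bar>\<close> by (intro mult_left_mono) auto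
  finally show ?thesis by (simp add: mult_ac)
qed

lemma Taylor_between:
  fixes diff :: "nat \<Rightarrow> real \<Rightarrow> real"
  assumes n: "n > 0"
    and d: "\<And>m t. m < n \<Longrightarrow> \<bar>t - q\<bar> \<le> \<bar>b\<bar> \<Longrightarrow> (diff m has_real_derivative diff (Suc m) t) (at t)"
  shows "\<exists>\<theta>. \<bar>\<theta>\<bar> \<le> \<bar>b\<bar> \<and> diff 0 (q + b) = (\<Sum>m<n. diff m q / fact m * b^m) + diff n (q + \<theta>) / fact n * b^n"
proof (cases "b = 0")
  case True
  have "(\<Sum>m<n. diff m q / fact m * b^m) = (\<Sum>m<n. if m = 0 then diff 0 q else 0)"
    by (rule sum.cong) (auto simp: True)
  also have "\<dots> = diff 0 q" using n by (simp add: sum.delta)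
  finally show ?thesis using True n by (intro exI[of _ 0]) auto
next
  case False
  have "\<exists>t. (if q + b < q then q + b < t \<and> t < q else q < t \<and> t < q + b) \<and>
    diff 0 (q + b) = (\<Sum>m<n. (diff m q / fact m) * (q + b - q)^m) + (diff n t / fact n) * (q + b - q)^n"
    by (rule Taylor[of n diff "diff 0" "q - \<bar>b\<bar>" "q + \<bar>b\<bar>" q "q + b"]) (use n d False in \<open>auto simp: abs_le_iff\<close>)
  then obtain t where t: "(if q + b < q then q + b < t \<and> t < q else q < t \<and> t < q + b)"
    "diff 0 (q + b) = (\<Sum>m<n. (diff m q / fact m) * b^m) + (diff n t / fact n) * b^n" by auto
  have "\<bar>t - q\<bar> \<le> \<bar>b\<bar>" using t(1) by (auto split: if_splits)
  then show ?thesis using t(2) by (intro exI[of _ "t - q"]) auto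
qed

text \<open>Mean value theorem in the first variable, then Taylor's formula in the second variable for G p
  (to third order) and for Gx p (to second order); hence only Gxx and Gxyy enter the error bound.\<close>

lemma taylor_mixed_remainder:
  fixes G Gx Gxx Gxy Gxyy Gy Gyy Gyyy :: "real \<Rightarrow> real \<Rightarrow> real"
  assumes ab: "\<bar>a\<bar> < \<eta>" "\<bar>b\<bar> < \<eta>"
    and d1: "\<And>x y. \<bar>x-p\<bar> < \<eta> \<Longrightarrow> \<bar>y-q\<bar> < \<eta> \<Longrightarrow> ((\<lambda>x. G x y) has_real_derivative Gx x y) (at x)"
    and d11: "\<And>x y. \<bar>x-p\<bar> < \<eta> \<Longrightarrow> \<bar>y-q\<bar> < \<eta> \<Longrightarrow> ((\<lambda>x. Gx x y) has_real_derivative Gxx x y) (at x)"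
    and d12: "\<And>x y. \<bar>x-p\<bar> < \<eta> \<Longrightarrow> \<bar>y-q\<bar> < \<eta> \<Longrightarrow> ((\<lambda>y. Gx x y) has_real_derivative Gxy x y) (at y)"
    and d122: "\<And>x y. \<bar>x-p\<bar> < \<eta> \<Longrightarrow> \<bar>y-q\<bar> < \<eta> \<Longrightarrow> ((\<lambda>y. Gxy x y) has_real_derivative Gxyy x y) (at y)"
    and d2: "\<And>x y. \<bar>x-p\<bar> < \<eta> \<Longrightarrow> \<bar>y-q\<bar> < \<eta> \<Longrightarrow> ((\<lambda>y. G x y) has_real_derivative Gy x y) (at y)"
    and d22: "\<And>x y. \<bar>x-p\<bar> < \<eta> \<Longrightarrow> \<bar>y-q\<bar> < \<eta> \<Longrightarrow> ((\<lambda>y. Gy x y) has_real_derivative Gyy x y) (at y)"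
    and d222: "\<And>x y. \<bar>x-p\<bar> < \<eta> \<Longrightarrow> \<bar>y-q\<bar> < \<eta> \<Longrightarrow> ((\<lambda>y. Gyy x y) has_real_derivative Gyyy x y) (at y)"
    and bd: "\<And>x y. \<bar>x-p\<bar> < \<eta> \<Longrightarrow> \<bar>y-q\<bar> < \<eta> \<Longrightarrow> \<bar>Gxx x y\<bar> \<le> M \<and> \<bar>Gxyy x y\<bar> \<le> M"
  shows "\<exists>\<theta>. \<bar>\<theta>\<bar> \<le> \<bar>b\<bar> \<and> \<bar>G (p+a) (q+b) - G p q - (a*Gx p q + a*b*Gxy p q + b*Gy p q + b^2/2*Gyy p q + b^3/6*Gyyy p (q+\<theta>))\<bar> \<le> M*(a^2 + \<bar>a\<bar>*b^2)"
proof -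
  have M: "M \<ge> 0" using bd[of p q] ab by force
  obtain \<xi> where \<xi>: "\<bar>\<xi> - p\<bar> \<le> \<bar>a\<bar>" "G (p+a) (q+b) - G p (q+b) = a * Gx \<xi> (q+b)"
    using MVT_between[of p "p+a" "\<lambda>x. G x (q+b)" "\<lambda>x. Gx x (q+b)"] d1 ab by force
  have l: "\<bar>Gx \<xi> (q+b) - Gx p (q+b)\<bar> \<le> M * \<bar>\<xi> - p\<bar>"
    by (rule abs_diff_le_by_deriv_bound[of p \<xi> "\<lambda>x. Gx x (q+b)" "\<lambda>x. Gxx x (q+b)"]) (use d11 bd ab \<xi> in force)+
  define D1 where "D1 = (\<lambda>m::nat. if m = 0 then (\<lambda>y. Gx p y) else if m = 1 then (\<lambda>y. Gxy p y) else (\<lambda>y. Gxyy p y))"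
  obtain \<theta>1 where \<theta>1: "\<bar>\<theta>1\<bar> \<le> \<bar>b\<bar>" "D1 0 (q+b) = (\<Sum>m<2. D1 m q / fact m * b^m) + D1 2 (q+\<theta>1) / fact 2 * b^2"
    using Taylor_between[where n=2 and diff=D1 and q=q and b=b] d12 d122 ab by (force simp: D1_def less_2_cases_iff)
  have T1: "Gx p (q+b) = Gx p q + b*Gxy p q + b^2/2*Gxyy p (q+\<theta>1)"
    using \<theta>1(2) by (simp add: D1_def numeral_2_eq_2)
  define D where "D = (\<lambda>m::nat. if m = 0 then (\<lambda>y. G p y) else if m = 1 then (\<lambda>y. Gy p y) else if m = 2 then (\<lambda>y. Gyy p y) else (\<lambda>y. Gyyy p y))"
  obtain \<theta> where \<theta>: "\<bar>\<theta>\<bar> \<le> \<bar>b\<bar>" "D 0 (q+b) = (\<Sum>m<3. D m q / fact m * b^m) + D 3 (q+\<theta>) / fact 3 * b^3"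
  proof -
    have "\<And>m t. m < 3 \<Longrightarrow> \<bar>t - q\<bar> \<le> \<bar>b\<bar> \<Longrightarrow> (D m has_real_derivative D (Suc m) t) (at t)"
    proof -
      fix m t assume "m < (3::nat)" "\<bar>t - q\<bar> \<le> \<bar>b\<bar>"
      then have "m = 0 \<or> m = 1 \<or> m = 2" "\<bar>t - q\<bar> < \<eta>" using ab by auto
      then show "(D m has_real_derivative D (Suc m) t) (at t)"
        using d2[of p t] d22[of p t] d222[of p t] ab by (auto simp: D_def)
    qed
    then show ?thesis using Taylor_between[where n=3 and diff=D and q=q and b=b] that by auto
  qed
  have T: "G p (q+b) = G p q + b*Gy p q + b^2/2*Gyy p q + b^3/6*Gyyy p (q+\<theta>)"
    using \<theta>(2) by (simp add: D_def numeral_3_eq_3 numeral_2_eq_2 fact_numeral; simp add: algebra_simps)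
  have eq: "G (p+a) (q+b) - G p q - (a*Gx p q + a*b*Gxy p q + b*Gy p q + b^2/2*Gyy p q + b^3/6*Gyyy p (q+\<theta>))
      = a*(Gx \<xi> (q+b) - Gx p (q+b)) + a*(b^2/2*Gxyy p (q+\<theta>1))"
    using \<xi>(2) T T1 by (simp add: algebra_simps)
  have e1: "\<bar>a*(Gx \<xi> (q+b) - Gx p (q+b))\<bar> \<le> M*a^2"
  proof -
    have "\<bar>a*(Gx \<xi> (q+b) - Gx p (q+b))\<bar> \<le> \<bar>a\<bar>*(M*\<bar>a\<bar>)"
      unfolding abs_mult using l \<xi>(1) M by (intro mult_left_mono) (auto intro: order.trans mult_left_mono)
    then show ?thesis by (simp add: power2_eq_square abs_mult_self mult_ac)
  qed
  have e2: "\<bar>a*(b^2/2*Gxyy p (q+\<theta>1))\<bar> \<le> M*(\<bar>a\<bar>*b^2)"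
  proof -
    have "\<bar>Gxyy p (q+\<theta>1)\<bar> \<le> M" using bd[of p "q+\<theta>1"] \<theta>1(1) ab by auto
    then have "\<bar>a*(b^2/2*Gxyy p (q+\<theta>1))\<bar> \<le> \<bar>a\<bar>*(b^2/2*M)"
      unfolding abs_mult by (intro mult_left_mono) (auto intro!: mult_left_mono)
    also have "\<dots> \<le> M*(\<bar>a\<bar>*b^2)" using M by (simp add: mult_ac mult_left_mono)
    finally show ?thesis .
  qed
  have "\<bar>a*(Gx \<xi> (q+b) - Gx p (q+b)) + a*(b^2/2*Gxyy p (q+\<theta>1))\<bar> \<le> M*a^2 + M*(\<bar>a\<bar>*b^2)"
    using e1 e2 abs_triangle_ineq[of "a*(Gx \<xi> (q+b) - Gx p (q+b))" "a*(b^2/2*Gxyy p (q+\<theta>1))"] by linarith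
  then have "\<bar>G (p+a) (q+b) - G p q - (a*Gx p q + a*b*Gxy p q + b*Gy p q + b^2/2*Gyy p q + b^3/6*Gyyy p (q+\<theta>))\<bar> \<le> M*(a^2 + \<bar>a\<bar>*b^2)"
    unfolding eq by (simp add: distrib_left)
  then show ?thesis using \<theta>(1) by blast
qed

lemma smooth_on_taylor_mixed:
  assumes sm: "smooth_on V f"
    and box: "\<And>x y. \<bar>x-p\<bar> < \<eta> \<Longrightarrow> \<bar>y-q\<bar> < \<eta> \<Longrightarrow> (x,y) \<in> V \<and> \<bar>pd1 (pd1 f) x y\<bar> \<le> M \<and> \<bar>pd2 (pd2 (pd1 f)) x y\<bar> \<le> M"
    and ab: "\<bar>a\<bar> < \<eta>" "\<bar>b\<bar> < \<eta>"
  shows "\<exists>\<theta>. \<bar>\<theta>\<bar> \<le> \<bar>b\<bar> \<and> \<bar>f (p+a) (q+b) - f p q - (a*pd1 f p q + a*b*pd2 (pd1 f) p q + b*pd2 f p q + b^2/2*pd2 (pd2 f) p q + b^3/6*pd2 (pd2 (pd2 f)) p (q+\<theta>))\<bar> \<le> M*(a^2+\<bar>a\<bar>*b^2)"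
proof (rule taylor_mixed_remainder[where G=f and Gx="pd1 f" and Gxx="pd1 (pd1 f)" and Gxy="pd2 (pd1 f)" and Gxyy="pd2 (pd2 (pd1 f))"
      and Gy="pd2 f" and Gyy="pd2 (pd2 f)" and Gyyy="pd2 (pd2 (pd2 f))" and \<eta>=\<eta>, OF ab])
  fix x y assume xy: "\<bar>x-p\<bar> < \<eta>" "\<bar>y-q\<bar> < \<eta>"
  then have V: "(x,y) \<in> V" using box by blast
  show "((\<lambda>x. f x y) has_real_derivative pd1 f x y) (at x)" using smooth_on_has_real_derivative_fst[OF sm V, of "[]"] by simp
  show "((\<lambda>x. pd1 f x y) has_real_derivative pd1 (pd1 f) x y) (at x)" using smooth_on_has_real_derivative_fst[OF sm V, of "[False]"] by simp
  show "((\<lambda>y. pd1 f x y) has_real_derivative pd2 (pd1 f) x y) (at y)" using smooth_on_has_real_derivative_snd[OF sm V, of "[False]"] by simp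
  show "((\<lambda>y. pd2 (pd1 f) x y) has_real_derivative pd2 (pd2 (pd1 f)) x y) (at y)" using smooth_on_has_real_derivative_snd[OF sm V, of "[True,False]"] by simp
  show "((\<lambda>y. f x y) has_real_derivative pd2 f x y) (at y)" using smooth_on_has_real_derivative_snd[OF sm V, of "[]"] by simp
  show "((\<lambda>y. pd2 f x y) has_real_derivative pd2 (pd2 f) x y) (at y)" using smooth_on_has_real_derivative_snd[OF sm V, of "[True]"] by simp
  show "((\<lambda>y. pd2 (pd2 f) x y) has_real_derivative pd2 (pd2 (pd2 f)) x y) (at y)" using smooth_on_has_real_derivative_snd[OF sm V, of "[True,True]"] by simp
  show "\<bar>pd1 (pd1 f) x y\<bar> \<le> M \<and> \<bar>pd2 (pd2 (pd1 f)) x y\<bar> \<le> M" using box xy by blast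
qed

section \<open>Convergence to a point of a finite level set\<close>

lemma eventually_near_level_set:
  fixes \<rho> P :: "real \<Rightarrow> real"
  assumes contP: "continuous_on UNIV P"
    and bnd: "eventually (\<lambda>\<tau>. \<bar>\<rho> \<tau>\<bar> \<le> N) F"
    and lim: "((\<lambda>\<tau>. P (\<rho> \<tau>)) \<longlongrightarrow> c) F"
    and e: "e > 0"
  shows "eventually (\<lambda>\<tau>. \<exists>z. P z = c \<and> \<bar>\<rho> \<tau> - z\<bar> < e) F"
proof -
  define Z where "Z = {y. P y = c}"
  define K where "K = cball 0 N \<inter> (\<Inter>z\<in>Z. - ball z e)"
  have cK: "compact K" unfolding K_def
    by (intro compact_Int_closed compact_cball closed_INT) auto
  have Kchar: "y \<in> K \<longleftrightarrow> \<bar>y\<bar> \<le> N \<and> (\<forall>z. P z = c \<longrightarrow> e \<le> \<bar>y - z\<bar>)" for y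
    by (auto simp: K_def Z_def dist_real_def abs_minus_commute)
  obtain m where m: "m > 0" "\<And>y. y \<in> K \<Longrightarrow> m \<le> \<bar>P y - c\<bar>"
  proof (cases "K = {}")
    case True then show ?thesis using that[of 1] by auto
  next
    case False
    have "continuous_on K (\<lambda>y. \<bar>P y - c\<bar>)"
      by (intro continuous_intros continuous_on_subset[OF contP]) auto
    from continuous_attains_inf[OF cK False this] obtain x where x: "x \<in> K" "\<And>y. y \<in> K \<Longrightarrow> \<bar>P x - c\<bar> \<le> \<bar>P y - c\<bar>"
      by blast
    have "P x \<noteq> c" using x(1) e unfolding Kchar by force
    then show ?thesis using that[of "\<bar>P x - c\<bar>"] x(2) by auto
  qed
  have "eventually (\<lambda>\<tau>. dist (P (\<rho> \<tau>)) c < m) F" using tendstoD[OF lim m(1)] .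
  then show ?thesis using bnd
  proof eventually_elim
    case (elim \<tau>)
    then have "\<rho> \<tau> \<notin> K" using m(2)[of "\<rho> \<tau>"] by (auto simp: dist_real_def)
    then show ?case using elim Kchar by force
  qed
qed

lemma finite_set_separated:
  fixes Z :: "real set"
  assumes "finite Z"
  obtains e where "e > 0" "\<And>z z'. z \<in> Z \<Longrightarrow> z' \<in> Z \<Longrightarrow> z \<noteq> z' \<Longrightarrow> 2*e \<le> \<bar>z - z'\<bar>"
proof -
  define D where "D = (\<lambda>(z, z'). \<bar>z - z'\<bar>) ` {(z, z'). z \<in> Z \<and> z' \<in> Z \<and> z \<noteq> z'}"
  have finD: "finite D" unfolding D_def
    by (rule finite_imageI, rule finite_subset[of _ "Z \<times> Z"]) (use assms in auto)
  define e where "e = (if D = {} then 1 else Min D / 2)"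
  show ?thesis
  proof (rule that)
    have "\<And>d. d \<in> D \<Longrightarrow> d > 0" by (auto simp: D_def)
    then show "e > 0" using Min_in[OF finD] by (auto simp: e_def)
    fix z z' assume "z \<in> Z" "z' \<in> Z" "z \<noteq> z'"
    then have "\<bar>z - z'\<bar> \<in> D" by (force simp: D_def)
    then show "2*e \<le> \<bar>z - z'\<bar>" using Min_le[OF finD] by (auto simp: e_def)
  qed
qed

lemma connected_subset_separated_balls:
  fixes S Z :: "real set"
  assumes S: "connected S" "S \<subseteq> (\<Union>z\<in>Z. ball z e)"
    and sep: "\<And>z z'. z \<in> Z \<Longrightarrow> z' \<in> Z \<Longrightarrow> z \<noteq> z' \<Longrightarrow> 2*e \<le> \<bar>z - z'\<bar>"
    and zs: "zs \<in> Z" "ball zs e \<inter> S \<noteq> {}"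
  shows "S \<subseteq> ball zs e"
proof -
  define B where "B = (\<Union>z\<in>Z - {zs}. ball z e)"
  have "ball zs e \<inter> B = {}"
  proof (rule equals0I)
    fix y assume "y \<in> ball zs e \<inter> B"
    then obtain z where "z \<in> Z" "z \<noteq> zs" "dist zs y < e" "dist z y < e" by (auto simp: B_def)
    then have "\<bar>z - zs\<bar> < 2*e" "2*e \<le> \<bar>z - zs\<bar>" using sep[of z zs] zs(1) by (auto simp: dist_real_def)
    then show False by simp
  qed
  moreover have "S \<subseteq> ball zs e \<union> B" using S(2) by (auto simp: B_def)
  ultimately have "B \<inter> S = {}"
    using connectedD[OF S(1), of "ball zs e" B] zs(2) by (auto simp: B_def)
  with \<open>S \<subseteq> ball zs e \<union> B\<close> show ?thesis by auto
qed

text \<open>A bounded continuous \<rho> whose values of P converge to c must converge itself when the level set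
  of c is finite: near 0+ the connected image of \<rho> cannot jump between the separated neighbourhoods
  of the points of the level set.\<close>

lemma tendsto_level_point:
  fixes \<rho> P :: "real \<Rightarrow> real"
  assumes contP: "continuous_on UNIV P"
    and fin: "finite {y. P y = c}"
    and contr: "continuous_on {0<..<T} \<rho>" and T: "T > 0"
    and bnd: "eventually (\<lambda>\<tau>. \<bar>\<rho> \<tau>\<bar> \<le> N) (at_right 0)"
    and lim: "((\<lambda>\<tau>. P (\<rho> \<tau>)) \<longlongrightarrow> c) (at_right 0)"
  shows "\<exists>R. (\<rho> \<longlongrightarrow> R) (at_right 0) \<and> P R = c"
proof -
  define Z where "Z = {y. P y = c}"
  obtain e0 where e0: "e0 > 0" and sep: "\<And>z z'. z \<in> Z \<Longrightarrow> z' \<in> Z \<Longrightarrow> z \<noteq> z' \<Longrightarrow> 2*e0 \<le> \<bar>z - z'\<bar>"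
    using finite_set_separated[OF fin[folded Z_def]] by blast
  have near: "\<And>e. e > 0 \<Longrightarrow> eventually (\<lambda>\<tau>. \<exists>z\<in>Z. \<bar>\<rho> \<tau> - z\<bar> < e) (at_right 0)"
    using eventually_near_level_set[OF contP bnd lim] by (auto simp: Z_def)
  from near[OF e0] obtain T1 where T1: "T1 > 0" "\<And>\<tau>. 0 < \<tau> \<Longrightarrow> \<tau> < T1 \<Longrightarrow> \<exists>z\<in>Z. \<bar>\<rho> \<tau> - z\<bar> < e0"
    unfolding eventually_at_right_field by auto
  define T2 where "T2 = min T T1"
  have T2: "T2 > 0" "T2 \<le> T" "T2 \<le> T1" using T T1 by (auto simp: T2_def)
  obtain zs where zs: "zs \<in> Z" "\<bar>\<rho> (T2/2) - zs\<bar> < e0" using T1(2)[of "T2/2"] T2 by auto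
  have "\<rho> ` {0<..<T2} \<subseteq> ball zs e0"
  proof (rule connected_subset_separated_balls[OF _ _ sep zs(1)])
    show "connected (\<rho> ` {0<..<T2})"
      by (intro connected_continuous_image continuous_on_subset[OF contr]) (use T2 in auto)
    show "\<rho> ` {0<..<T2} \<subseteq> (\<Union>z\<in>Z. ball z e0)"
      using T1(2) T2 by (force simp: dist_real_def abs_minus_commute)
    show "ball zs e0 \<inter> \<rho> ` {0<..<T2} \<noteq> {}"
      using zs T2 by (auto simp: dist_real_def abs_minus_commute intro!: exI[of _ "\<rho> (T2/2)"])
  qed
  have "(\<rho> \<longlongrightarrow> zs) (at_right 0)"
  proof (rule tendstoI)
    fix e :: real assume e: "e > 0"
    have "eventually (\<lambda>\<tau>. \<exists>z\<in>Z. \<bar>\<rho> \<tau> - z\<bar> < min e e0) (at_right 0)" using near[of "min e e0"] e e0 by simp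
    moreover have "eventually (\<lambda>\<tau>. 0 < \<tau> \<and> \<tau> < T2) (at_right 0)" unfolding eventually_at_right_field using T2 by auto
    ultimately show "eventually (\<lambda>\<tau>. dist (\<rho> \<tau>) zs < e) (at_right 0)"
    proof eventually_elim
      case (elim \<tau>)
      then obtain z where z: "z \<in> Z" "\<bar>\<rho> \<tau> - z\<bar> < min e e0" by auto
      have "\<rho> \<tau> \<in> ball zs e0"
        using elim by (intro subsetD[OF \<open>\<rho> ` {0<..<T2} \<subseteq> ball zs e0\<close>]) auto
      then have "\<bar>\<rho> \<tau> - zs\<bar> < e0" by (simp add: dist_real_def abs_minus_commute)
      with z sep[of z zs] zs(1) have "z = zs" by fastforce
      then show ?case using z by (simp add: dist_real_def)
    qed
  qed
  then show ?thesis using zs(1) by (auto simp: Z_def)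
qed

lemma depressed_cubic_has_root:
  fixes \<gamma> \<beta> w :: real
  assumes "\<gamma> \<noteq> 0"
  shows "\<exists>R. w = \<beta>*R - \<gamma>*R^3/6"
proof -
  define f where "f R = \<beta>*R - \<gamma>*R^3/6" for R
  define Y where "Y = 1 + 6*(\<bar>\<beta>\<bar> + \<bar>w\<bar>)/\<bar>\<gamma>\<bar>"
  have g: "\<bar>\<gamma>\<bar> > 0" using assms by simp
  have Y1: "Y \<ge> 1" using g by (simp add: Y_def)
  have "Y*Y \<ge> Y*(6*(\<bar>\<beta>\<bar> + \<bar>w\<bar>)/\<bar>\<gamma>\<bar> + 1)" using Y1 by (intro mult_left_mono) (auto simp: Y_def)
  then have "\<bar>\<gamma>\<bar>*(Y*Y*Y) \<ge> \<bar>\<gamma>\<bar>*(Y*(Y*(6*(\<bar>\<beta>\<bar> + \<bar>w\<bar>)/\<bar>\<gamma>\<bar> + 1)))" using Y1 g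
    by (intro mult_left_mono) (auto simp: mult.assoc)
  also have "\<bar>\<gamma>\<bar>*(Y*(Y*(6*(\<bar>\<beta>\<bar> + \<bar>w\<bar>)/\<bar>\<gamma>\<bar> + 1))) = Y*(Y*6*(\<bar>\<beta>\<bar> + \<bar>w\<bar>) + Y*\<bar>\<gamma>\<bar>)"
    using g by (simp add: field_simps)
  finally have h: "\<bar>\<gamma>\<bar>*(Y*Y*Y) \<ge> Y*(Y*6*(\<bar>\<beta>\<bar> + \<bar>w\<bar>) + Y*\<bar>\<gamma>\<bar>)" .
  have "Y*(Y*6*(\<bar>\<beta>\<bar> + \<bar>w\<bar>) + Y*\<bar>\<gamma>\<bar>) > 6*(\<bar>\<beta>\<bar>*Y + \<bar>w\<bar>)"
  proof -
    have "Y*(Y*6*(\<bar>\<beta>\<bar> + \<bar>w\<bar>)) \<ge> 1*(Y*6*(\<bar>\<beta>\<bar> + \<bar>w\<bar>))" using Y1 by (intro mult_right_mono) auto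
    moreover have "1*\<bar>w\<bar> \<le> Y*\<bar>w\<bar>" using Y1 by (intro mult_right_mono) auto
    then have "Y*6*(\<bar>\<beta>\<bar> + \<bar>w\<bar>) \<ge> 6*(\<bar>\<beta>\<bar>*Y + \<bar>w\<bar>)" by (simp add: algebra_simps)
    moreover have "Y*(Y*\<bar>\<gamma>\<bar>) > 0" using Y1 g by simp
    ultimately show ?thesis by (simp add: algebra_simps)
  qed
  with h have big: "\<bar>\<gamma>\<bar>*Y^3/6 > \<bar>\<beta>\<bar>*Y + \<bar>w\<bar>" by (simp add: power3_eq_cube)
  have "\<bar>f Y\<bar> \<ge> \<bar>\<gamma>*Y^3/6\<bar> - \<bar>\<beta>*Y\<bar>" by (simp add: f_def)
  also have "\<bar>\<gamma>*Y^3/6\<bar> = \<bar>\<gamma>\<bar>*Y^3/6" using Y1 by (simp add: abs_mult)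
  also have "\<bar>\<beta>*Y\<bar> = \<bar>\<beta>\<bar>*Y" using Y1 by (simp add: abs_mult)
  finally have fY: "\<bar>f Y\<bar> > \<bar>w\<bar>" using big by linarith
  have odd: "f (-Y) = - f Y" by (simp add: f_def)
  have cont: "\<forall>x. isCont f x" unfolding f_def by (intro allI continuous_intros) auto
  have "\<exists>x. - Y \<le> x \<and> x \<le> Y \<and> f x = w"
  proof (cases "f Y > 0")
    case True
    then have "f (-Y) \<le> w" "w \<le> f Y" using fY odd by auto
    then show ?thesis using IVT[of f "-Y" w Y] cont Y1 by auto
  next
    case False
    then have "f Y \<le> w" "w \<le> f (-Y)" using fY odd by auto
    then show ?thesis using IVT2[of f Y w "-Y"] cont Y1 by auto
  qed
  then show ?thesis by (auto simp: f_def)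
qed

section \<open>Estimates for the expanded hodograph equations\<close>

lemma power2_le_abs_of_abs_le_1: "\<bar>b\<bar> \<le> 1 \<Longrightarrow> b^2 \<le> \<bar>b\<bar>" for b :: real
proof -
  assume h: "\<bar>b\<bar> \<le> 1"
  have "b^2 = \<bar>b\<bar>*\<bar>b\<bar>" by (simp add: power2_eq_square abs_mult_self)
  also have "\<dots> \<le> 1*\<bar>b\<bar>" using h by (intro mult_right_mono) auto
  finally show ?thesis by simp
qed

lemma abs_power3_le_power2: "\<bar>b\<bar> \<le> 1 \<Longrightarrow> \<bar>b\<bar>^3 \<le> b^2" for b :: real
proof -
  assume h: "\<bar>b\<bar> \<le> 1"
  have "\<bar>b\<bar>^3 = \<bar>b\<bar>*\<bar>b\<bar>^2" by (simp add: power3_eq_cube power2_eq_square)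
  also have "\<dots> \<le> 1*\<bar>b\<bar>^2" using h by (intro mult_right_mono) auto
  finally show ?thesis by simp
qed

lemma abs_add3_le: "\<bar>x1+x2+x3\<bar> \<le> \<bar>x1\<bar>+\<bar>x2\<bar>+\<bar>x3::real\<bar>"
  by (rule order_trans[OF abs_triangle_ineq], rule add_right_mono, rule abs_triangle_ineq)

lemma abs_add4_le: "\<bar>x1+x2+x3+x4\<bar> \<le> \<bar>x1\<bar>+\<bar>x2\<bar>+\<bar>x3\<bar>+\<bar>x4::real\<bar>"
  by (rule order_trans[OF abs_triangle_ineq], rule add_right_mono, rule abs_add3_le)

lemma abs_add5_le: "\<bar>x1+x2+x3+x4+x5\<bar> \<le> \<bar>x1\<bar>+\<bar>x2\<bar>+\<bar>x3\<bar>+\<bar>x4\<bar>+\<bar>x5::real\<bar>"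
  by (rule order_trans[OF abs_triangle_ineq], rule add_right_mono, rule abs_add4_le)

lemma abs_add3_diff_le: "\<bar>x1+x2+x3-x4\<bar> \<le> \<bar>x1\<bar>+\<bar>x2\<bar>+\<bar>x3\<bar>+\<bar>x4::real\<bar>"
  using abs_add4_le[of x1 x2 x3 "-x4"] by simp

lemma abs_add2_diff_le: "\<bar>x1+x2-x4\<bar> \<le> \<bar>x1\<bar>+\<bar>x2\<bar>+\<bar>x4::real\<bar>"
  using abs_add3_le[of x1 x2 "-x4"] by simp

lemma taylor_polynomial_abs_le:
  fixes a b l1 l12 l2 l22 l3 M :: real
  assumes "\<bar>a\<bar> \<le> 1" "\<bar>b\<bar> \<le> 1" "\<bar>l3\<bar> \<le> M"
  shows "\<bar>a*l1 + a*b*l12 + b*l2 + b^2/2*l22 + b^3/6*l3\<bar> \<le> (\<bar>l1\<bar>+\<bar>l12\<bar>+\<bar>l2\<bar>+\<bar>l22\<bar>+M)*(\<bar>a\<bar>+\<bar>b\<bar>)"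
proof -
  have M: "M \<ge> 0" using assms(3) by linarith
  have b2: "b^2 \<le> \<bar>b\<bar>" using power2_le_abs_of_abs_le_1 assms by blast
  have b3: "\<bar>b\<bar>^3 \<le> \<bar>b\<bar>" using abs_power3_le_power2[OF assms(2)] b2 by linarith
  have ab: "\<bar>a\<bar>*\<bar>b\<bar> \<le> \<bar>a\<bar>" using assms(2) by (simp add: mult_left_le)
  have t1: "\<bar>a*l1\<bar> \<le> \<bar>l1\<bar>*(\<bar>a\<bar>+\<bar>b\<bar>)"
  proof -
    have "\<bar>a*l1\<bar> = \<bar>l1\<bar>*\<bar>a\<bar>" by (simp add: abs_mult)
    also have "\<dots> \<le> \<bar>l1\<bar>*(\<bar>a\<bar>+\<bar>b\<bar>)" by (intro mult_left_mono) auto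
    finally show ?thesis .
  qed
  have t2: "\<bar>a*b*l12\<bar> \<le> \<bar>l12\<bar>*(\<bar>a\<bar>+\<bar>b\<bar>)"
  proof -
    have "\<bar>a*b*l12\<bar> = \<bar>l12\<bar>*(\<bar>a\<bar>*\<bar>b\<bar>)" by (simp add: abs_mult mult_ac)
    also have "\<dots> \<le> \<bar>l12\<bar>*(\<bar>a\<bar>+\<bar>b\<bar>)" using ab by (intro mult_left_mono) auto
    finally show ?thesis .
  qed
  have t3: "\<bar>b*l2\<bar> \<le> \<bar>l2\<bar>*(\<bar>a\<bar>+\<bar>b\<bar>)"
  proof -
    have "\<bar>b*l2\<bar> = \<bar>l2\<bar>*\<bar>b\<bar>" by (simp add: abs_mult)
    also have "\<dots> \<le> \<bar>l2\<bar>*(\<bar>a\<bar>+\<bar>b\<bar>)" by (intro mult_left_mono) auto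
    finally show ?thesis .
  qed
  have t4: "\<bar>b^2/2*l22\<bar> \<le> \<bar>l22\<bar>*(\<bar>a\<bar>+\<bar>b\<bar>)"
  proof -
    have "\<bar>b^2/2*l22\<bar> = \<bar>l22\<bar>*(b^2/2)" by (simp add: abs_mult mult_ac)
    also have "\<dots> \<le> \<bar>l22\<bar>*(\<bar>a\<bar>+\<bar>b\<bar>)" using b2 by (intro mult_left_mono) auto
    finally show ?thesis .
  qed
  have t5: "\<bar>b^3/6*l3\<bar> \<le> M*(\<bar>a\<bar>+\<bar>b\<bar>)"
  proof -
    have "\<bar>b^3/6*l3\<bar> = \<bar>l3\<bar>*(\<bar>b\<bar>^3/6)" by (simp add: abs_mult power_abs mult_ac)
    also have "\<dots> \<le> M*(\<bar>a\<bar>+\<bar>b\<bar>)" using b3 assms(3) by (intro mult_mono) auto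
    finally show ?thesis .
  qed
  have "\<bar>a*l1 + a*b*l12 + b*l2 + b^2/2*l22 + b^3/6*l3\<bar> \<le> \<bar>a*l1\<bar> + \<bar>a*b*l12\<bar> + \<bar>b*l2\<bar> + \<bar>b^2/2*l22\<bar> + \<bar>b^3/6*l3\<bar>"
    by (rule abs_add5_le)
  also have "\<dots> \<le> (\<bar>l1\<bar>+\<bar>l12\<bar>+\<bar>l2\<bar>+\<bar>l22\<bar>+M)*(\<bar>a\<bar>+\<bar>b\<bar>)"
    using t1 t2 t3 t4 t5 by (simp add: algebra_simps)
  finally show ?thesis .
qed

lemma taylor_increment_abs_le:
  fixes a b lpd :: real
  assumes E2: "\<bar>lpd - (a*l1 + a*b*l12 + b*l2 + b^2/2*l22 + b^3/6*l3)\<bar> \<le> M*(a^2+\<bar>a\<bar>*b^2)"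
    and l3: "\<bar>l3\<bar> \<le> M" and a1: "\<bar>a\<bar> \<le> 1" and b1: "\<bar>b\<bar> \<le> 1"
  shows "\<bar>lpd\<bar> \<le> (\<bar>l1\<bar>+\<bar>l12\<bar>+\<bar>l2\<bar>+\<bar>l22\<bar>+3*M)*(\<bar>a\<bar>+\<bar>b\<bar>)"
proof -
  have M: "M \<ge> 0" using l3 by linarith
  define e2 where "e2 = lpd - (a*l1 + a*b*l12 + b*l2 + b^2/2*l22 + b^3/6*l3)"
  define W where "W = a^2+\<bar>a\<bar>*b^2"
  have "lpd = (a*l1 + a*b*l12 + b*l2 + b^2/2*l22 + b^3/6*l3) + e2" unfolding e2_def by simp
  then have h1: "\<bar>lpd\<bar> \<le> \<bar>a*l1 + a*b*l12 + b*l2 + b^2/2*l22 + b^3/6*l3\<bar> + \<bar>e2\<bar>" by (metis abs_triangle_ineq)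
  have "\<bar>e2\<bar> \<le> M*W" using E2 by (simp add: e2_def W_def)
  also have "W \<le> 2*(\<bar>a\<bar>+\<bar>b\<bar>)"
  proof -
    have "a^2 \<le> \<bar>a\<bar>" using power2_le_abs_of_abs_le_1 a1 by blast
    moreover have "\<bar>a\<bar>*b^2 \<le> \<bar>a\<bar>" using power2_le_abs_of_abs_le_1[OF b1] b1 by (simp add: mult_left_le power_le_one)
    ultimately show ?thesis by (simp add: W_def)
  qed
  then have "M*W \<le> M*(2*(\<bar>a\<bar>+\<bar>b\<bar>))" using M by (intro mult_left_mono) auto
  finally have h2: "\<bar>e2\<bar> \<le> M*(2*(\<bar>a\<bar>+\<bar>b\<bar>))" .
  have h3: "\<bar>a*l1 + a*b*l12 + b*l2 + b^2/2*l22 + b^3/6*l3\<bar> \<le> (\<bar>l1\<bar>+\<bar>l12\<bar>+\<bar>l2\<bar>+\<bar>l22\<bar>+M)*(\<bar>a\<bar>+\<bar>b\<bar>)"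
    using taylor_polynomial_abs_le[OF a1 b1 l3, of l1 l12 l2 l22] .
  have "\<bar>lpd\<bar> \<le> (\<bar>l1\<bar>+\<bar>l12\<bar>+\<bar>l2\<bar>+\<bar>l22\<bar>+M)*(\<bar>a\<bar>+\<bar>b\<bar>) + M*(2*(\<bar>a\<bar>+\<bar>b\<bar>))"
    using h1 h2 h3 by linarith
  then show ?thesis by (simp add: algebra_simps)
qed

lemma plus_equation_estimate:
  fixes a b \<tau> \<sigma> mpd lpd :: real
  assumes E1: "\<bar>mpd - (a*m1 + a*b*m12 + b*m2 + b^2/2*m22 + b^3/6*m3)\<bar> \<le> M*(a^2+\<bar>a\<bar>*b^2)"
    and E2: "\<bar>lpd - (a*l1 + a*b*l12 + b*l2 + b^2/2*l22 + b^3/6*l3)\<bar> \<le> M*(a^2+\<bar>a\<bar>*b^2)"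
    and m3: "\<bar>m3\<bar> \<le> M" and l3: "\<bar>l3\<bar> \<le> M" and m2: "m2 = t0*l2" and m22: "m22 = t0*l22"
    and a1: "\<bar>a\<bar> \<le> 1" and b1: "\<bar>b\<bar> \<le> 1" and s: "\<bar>\<sigma>\<bar> \<le> S"
    and I: "\<tau>^2*Xp = mpd - t0*lpd - lpd*(\<tau>^2*\<sigma>)"
  shows "\<bar>\<tau>^2*Xp - (m1 - t0*l1)*a\<bar> \<le> (\<bar>m12\<bar> + \<bar>t0\<bar>*\<bar>l12\<bar> + M + \<bar>t0\<bar>*M + (\<bar>l1\<bar>+\<bar>l12\<bar>+\<bar>l2\<bar>+\<bar>l22\<bar>+3*M)*S)
     * (\<bar>a\<bar>*\<bar>b\<bar> + \<bar>b\<bar>^3 + a^2 + \<bar>a\<bar>*b^2 + \<tau>^2*(\<bar>a\<bar>+\<bar>b\<bar>))"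
proof -
  have M: "M \<ge> 0" using m3 by linarith
  have S: "S \<ge> 0" using s by linarith
  define e1 where "e1 = mpd - (a*m1 + a*b*m12 + b*m2 + b^2/2*m22 + b^3/6*m3)"
  define e2 where "e2 = lpd - (a*l1 + a*b*l12 + b*l2 + b^2/2*l22 + b^3/6*l3)"
  define L where "L = \<bar>l1\<bar>+\<bar>l12\<bar>+\<bar>l2\<bar>+\<bar>l22\<bar>+3*M"
  define W where "W = a^2+\<bar>a\<bar>*b^2"
  have W: "W \<ge> 0" by (simp add: W_def)
  have eq: "\<tau>^2*Xp - (m1 - t0*l1)*a = a*b*(m12 - t0*l12) + b^3/6*(m3 - t0*l3) + (e1 - t0*e2) - lpd*(\<tau>^2*\<sigma>)"
    unfolding I e1_def e2_def m2 m22 by (simp add: field_simps)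
  have f1: "\<bar>a*b*(m12 - t0*l12)\<bar> \<le> (\<bar>m12\<bar> + \<bar>t0\<bar>*\<bar>l12\<bar>)*(\<bar>a\<bar>*\<bar>b\<bar>)"
  proof -
    have h: "\<bar>m12 - t0*l12\<bar> \<le> \<bar>m12\<bar> + \<bar>t0\<bar>*\<bar>l12\<bar>" by (simp add: abs_mult[symmetric] abs_triangle_ineq4)
    have "\<bar>a*b*(m12 - t0*l12)\<bar> = (\<bar>a\<bar>*\<bar>b\<bar>)*\<bar>m12 - t0*l12\<bar>" by (simp add: abs_mult)
    also have "\<dots> \<le> (\<bar>a\<bar>*\<bar>b\<bar>)*(\<bar>m12\<bar> + \<bar>t0\<bar>*\<bar>l12\<bar>)" using h by (intro mult_left_mono) auto
    finally show ?thesis by (simp add: mult.commute)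
  qed
  have f2: "\<bar>b^3/6*(m3 - t0*l3)\<bar> \<le> (M + \<bar>t0\<bar>*M)*\<bar>b\<bar>^3"
  proof -
    have "\<bar>m3 - t0*l3\<bar> \<le> \<bar>m3\<bar> + \<bar>t0\<bar>*\<bar>l3\<bar>" by (simp add: abs_mult[symmetric] abs_triangle_ineq4)
    also have "\<dots> \<le> M + \<bar>t0\<bar>*M" using m3 l3 by (intro add_mono mult_left_mono) auto
    finally have h: "\<bar>m3 - t0*l3\<bar> \<le> M + \<bar>t0\<bar>*M" .
    have "\<bar>b^3/6*(m3 - t0*l3)\<bar> = \<bar>b\<bar>^3/6*\<bar>m3 - t0*l3\<bar>" by (simp add: abs_mult power_abs)
    also have "\<dots> \<le> \<bar>b\<bar>^3*(M + \<bar>t0\<bar>*M)" using h by (intro mult_mono) auto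
    finally show ?thesis by (simp add: mult.commute)
  qed
  have f3: "\<bar>e1 - t0*e2\<bar> \<le> (M + \<bar>t0\<bar>*M)*W"
  proof -
    have "\<bar>e1 - t0*e2\<bar> \<le> \<bar>e1\<bar> + \<bar>t0\<bar>*\<bar>e2\<bar>" by (simp add: abs_mult[symmetric] abs_triangle_ineq4)
    also have "\<dots> \<le> M*W + \<bar>t0\<bar>*(M*W)" using E1 E2 unfolding e1_def e2_def W_def by (intro add_mono mult_left_mono) auto
    finally show ?thesis by (simp add: algebra_simps)
  qed
  have lp: "\<bar>lpd\<bar> \<le> L*(\<bar>a\<bar>+\<bar>b\<bar>)"
    unfolding L_def by (rule taylor_increment_abs_le[OF E2 l3 a1 b1])
  have f4: "\<bar>lpd*(\<tau>^2*\<sigma>)\<bar> \<le> (L*S)*(\<tau>^2*(\<bar>a\<bar>+\<bar>b\<bar>))"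
  proof -
    have "\<bar>lpd*(\<tau>^2*\<sigma>)\<bar> = \<bar>lpd\<bar>*(\<tau>^2*\<bar>\<sigma>\<bar>)" by (simp add: abs_mult)
    also have "\<dots> \<le> (L*(\<bar>a\<bar>+\<bar>b\<bar>))*(\<tau>^2*S)" using lp s by (intro mult_mono mult_left_mono) auto
    finally show ?thesis by (simp add: mult_ac)
  qed
  define Z where "Z = \<bar>a\<bar>*\<bar>b\<bar> + \<bar>b\<bar>^3 + a^2 + \<bar>a\<bar>*b^2 + \<tau>^2*(\<bar>a\<bar>+\<bar>b\<bar>)"
  have L0: "L \<ge> 0" using M by (simp add: L_def)
  have "\<bar>\<tau>^2*Xp - (m1 - t0*l1)*a\<bar> \<le> (\<bar>m12\<bar> + \<bar>t0\<bar>*\<bar>l12\<bar>)*(\<bar>a\<bar>*\<bar>b\<bar>) + (M + \<bar>t0\<bar>*M)*\<bar>b\<bar>^3 + (M + \<bar>t0\<bar>*M)*W + (L*S)*(\<tau>^2*(\<bar>a\<bar>+\<bar>b\<bar>))"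
    unfolding eq by (rule order_trans[OF abs_add3_diff_le], intro add_mono f1 f2 f3 f4)
  also have "\<dots> \<le> (\<bar>m12\<bar> + \<bar>t0\<bar>*\<bar>l12\<bar> + M + \<bar>t0\<bar>*M + L*S) * Z"
  proof -
    have z1: "\<bar>a\<bar>*\<bar>b\<bar> \<le> Z" "\<bar>b\<bar>^3 \<le> Z" "W \<le> Z" "\<tau>^2*(\<bar>a\<bar>+\<bar>b\<bar>) \<le> Z"
      by (auto simp: Z_def W_def)
    have c0: "\<bar>m12\<bar> + \<bar>t0\<bar>*\<bar>l12\<bar> \<ge> 0" "M + \<bar>t0\<bar>*M \<ge> 0" "L*S \<ge> 0" using M L0 S by auto
    have "(\<bar>m12\<bar> + \<bar>t0\<bar>*\<bar>l12\<bar>)*(\<bar>a\<bar>*\<bar>b\<bar>) \<le> (\<bar>m12\<bar> + \<bar>t0\<bar>*\<bar>l12\<bar>)*Z" using z1 c0 by (intro mult_left_mono) auto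
    moreover have "(M + \<bar>t0\<bar>*M)*\<bar>b\<bar>^3 + (M + \<bar>t0\<bar>*M)*W \<le> (M + \<bar>t0\<bar>*M)*Z"
    proof -
      have "\<bar>b\<bar>^3 + W \<le> Z" by (auto simp: Z_def W_def)
      then have "(M + \<bar>t0\<bar>*M)*(\<bar>b\<bar>^3 + W) \<le> (M + \<bar>t0\<bar>*M)*Z" using c0 by (intro mult_left_mono) auto
      then show ?thesis by (simp add: algebra_simps)
    qed
    moreover have "(L*S)*(\<tau>^2*(\<bar>a\<bar>+\<bar>b\<bar>)) \<le> (L*S)*Z" using z1 c0 by (intro mult_left_mono) auto
    ultimately show ?thesis by (simp add: algebra_simps)
  qed
  finally show ?thesis by (simp add: Z_def L_def)
qed

lemma taylor_increment_minus_linear_abs_le: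
  fixes a b lmd :: real
  assumes E2: "\<bar>lmd - (a*k1 + a*b*k12 + b*k2 + b^2/2*k22 + b^3/6*k3)\<bar> \<le> M*(a^2+\<bar>a\<bar>*b^2)"
    and k3: "\<bar>k3\<bar> \<le> M" and a1: "\<bar>a\<bar> \<le> 1" and b1: "\<bar>b\<bar> \<le> 1"
  shows "\<bar>lmd - k2*b\<bar> \<le> (\<bar>k1\<bar>+\<bar>k12\<bar>+\<bar>k22\<bar>+3*M)*(\<bar>a\<bar> + b^2)"
proof -
  have M: "M \<ge> 0" using k3 by linarith
  define e2 where "e2 = lmd - (a*k1 + a*b*k12 + b*k2 + b^2/2*k22 + b^3/6*k3)"
  define W where "W = a^2+\<bar>a\<bar>*b^2"
  have ab: "\<bar>a\<bar>*\<bar>b\<bar> \<le> \<bar>a\<bar>" using b1 by (simp add: mult_left_le)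
  have b3: "\<bar>b\<bar>^3 \<le> b^2" using abs_power3_le_power2 b1 by blast
  have a2: "a^2 \<le> \<bar>a\<bar>" using power2_le_abs_of_abs_le_1 a1 by blast
  have ab2: "\<bar>a\<bar>*b^2 \<le> \<bar>a\<bar>" using power2_le_abs_of_abs_le_1[OF b1] b1 by (simp add: mult_left_le power_le_one)
  have "\<bar>lmd - k2*b\<bar> \<le> \<bar>a*k1\<bar> + \<bar>a*b*k12\<bar> + \<bar>b^2/2*k22\<bar> + \<bar>b^3/6*k3\<bar> + \<bar>e2\<bar>"
  proof -
    have "lmd - k2*b = a*k1 + a*b*k12 + b^2/2*k22 + b^3/6*k3 + e2" unfolding e2_def by (simp add: algebra_simps)
    then show ?thesis using abs_add5_le[of "a*k1" "a*b*k12" "b^2/2*k22" "b^3/6*k3" e2] by simp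
  qed
  also have "\<bar>a*k1\<bar> = \<bar>k1\<bar>*\<bar>a\<bar>" by (simp add: abs_mult)
  also have "\<bar>a*b*k12\<bar> \<le> \<bar>k12\<bar>*\<bar>a\<bar>"
  proof -
    have "\<bar>a*b*k12\<bar> = \<bar>k12\<bar>*(\<bar>a\<bar>*\<bar>b\<bar>)" by (simp add: abs_mult mult_ac)
    also have "\<dots> \<le> \<bar>k12\<bar>*\<bar>a\<bar>" using ab by (intro mult_left_mono) auto
    finally show ?thesis .
  qed
  also have "\<bar>b^2/2*k22\<bar> \<le> \<bar>k22\<bar>*b^2" by (simp add: abs_mult mult.commute mult_left_mono)
  also have "\<bar>b^3/6*k3\<bar> \<le> M*b^2"
  proof -
    have "\<bar>b^3/6*k3\<bar> = \<bar>k3\<bar>*(\<bar>b\<bar>^3/6)" by (simp add: abs_mult power_abs mult_ac)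
    also have "\<dots> \<le> M*b^2"
    proof -
      have "\<bar>b\<bar>^3/6 \<le> b^2" using b3 zero_le_power2[of b] by linarith
      then show ?thesis using k3 by (intro mult_mono) auto
    qed
    finally show ?thesis .
  qed
  also have "\<bar>e2\<bar> \<le> M*(2*\<bar>a\<bar>)"
  proof -
    have "\<bar>e2\<bar> \<le> M*W" using E2 by (simp add: e2_def W_def)
    also have "\<dots> \<le> M*(2*\<bar>a\<bar>)" using a2 ab2 M by (intro mult_left_mono) (auto simp: W_def)
    finally show ?thesis .
  qed
  finally have "\<bar>lmd - k2*b\<bar> \<le> \<bar>k1\<bar>*\<bar>a\<bar> + \<bar>k12\<bar>*\<bar>a\<bar> + \<bar>k22\<bar>*b^2 + M*b^2 + M*(2*\<bar>a\<bar>)" by simp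
  also have "\<dots> \<le> (\<bar>k1\<bar>+\<bar>k12\<bar>+\<bar>k22\<bar>+3*M)*(\<bar>a\<bar> + b^2)" using M by (simp add: algebra_simps)
  finally show ?thesis .
qed

lemma minus_equation_estimate:
  fixes a b \<tau> \<sigma> mmd lmd :: real
  assumes E1: "\<bar>mmd - (a*n1 + a*b*n12 + b*n2 + b^2/2*n22 + b^3/6*n3)\<bar> \<le> M*(a^2+\<bar>a\<bar>*b^2)"
    and E2: "\<bar>lmd - (a*k1 + a*b*k12 + b*k2 + b^2/2*k22 + b^3/6*k3)\<bar> \<le> M*(a^2+\<bar>a\<bar>*b^2)"
    and k3: "\<bar>k3\<bar> \<le> M" and n1: "n1 = t0*k1" and n12: "n12 = t0*k12" and n2: "n2 = t0*k2" and n22: "n22 = t0*k22"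
    and a1: "\<bar>a\<bar> \<le> 1" and b1: "\<bar>b\<bar> \<le> 1" and s: "\<bar>\<sigma>\<bar> \<le> S"
    and g: "\<bar>n3 - t0*k3 + \<gamma>\<bar> \<le> 6*\<epsilon>"
    and I: "\<tau>^3*Xm = mmd - t0*lmd - lmd*(\<tau>^2*\<sigma>)"
  shows "\<bar>\<tau>^3*Xm - (-\<gamma>/6*b^3 - k2*b*\<tau>^2*\<sigma>)\<bar> \<le> \<epsilon>*\<bar>b\<bar>^3 +
     ((1+\<bar>t0\<bar>)*M + (\<bar>k1\<bar>+\<bar>k12\<bar>+\<bar>k22\<bar>+3*M)*S)*(a^2 + \<bar>a\<bar>*b^2 + \<tau>^2*(\<bar>a\<bar> + b^2))"
proof -
  have M: "M \<ge> 0" using k3 by linarith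
  have S: "S \<ge> 0" using s by linarith
  define e1 where "e1 = mmd - (a*n1 + a*b*n12 + b*n2 + b^2/2*n22 + b^3/6*n3)"
  define e2 where "e2 = lmd - (a*k1 + a*b*k12 + b*k2 + b^2/2*k22 + b^3/6*k3)"
  define L where "L = \<bar>k1\<bar>+\<bar>k12\<bar>+\<bar>k22\<bar>+3*M"
  define W where "W = a^2+\<bar>a\<bar>*b^2"
  have eq: "\<tau>^3*Xm - (-\<gamma>/6*b^3 - k2*b*\<tau>^2*\<sigma>) = b^3/6*(n3 - t0*k3 + \<gamma>) + (e1 - t0*e2) - (lmd - k2*b)*(\<tau>^2*\<sigma>)"
    unfolding I e1_def e2_def n1 n12 n2 n22 by (simp add: field_simps)
  have f1: "\<bar>b^3/6*(n3 - t0*k3 + \<gamma>)\<bar> \<le> \<epsilon>*\<bar>b\<bar>^3"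
  proof -
    have "\<bar>b^3/6*(n3 - t0*k3 + \<gamma>)\<bar> = \<bar>b\<bar>^3*(\<bar>n3 - t0*k3 + \<gamma>\<bar>/6)" by (simp add: abs_mult power_abs)
    also have "\<dots> \<le> \<bar>b\<bar>^3*\<epsilon>" using g by (intro mult_left_mono) auto
    finally show ?thesis by (simp add: mult.commute)
  qed
  have f3: "\<bar>e1 - t0*e2\<bar> \<le> (1+\<bar>t0\<bar>)*M*W"
  proof -
    have "\<bar>e1 - t0*e2\<bar> \<le> \<bar>e1\<bar> + \<bar>t0\<bar>*\<bar>e2\<bar>" by (simp add: abs_mult[symmetric] abs_triangle_ineq4)
    also have "\<dots> \<le> M*W + \<bar>t0\<bar>*(M*W)" using E1 E2 unfolding e1_def e2_def W_def by (intro add_mono mult_left_mono) auto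
    finally show ?thesis by (simp add: algebra_simps)
  qed
  have lm: "\<bar>lmd - k2*b\<bar> \<le> L*(\<bar>a\<bar> + b^2)"
    unfolding L_def by (rule taylor_increment_minus_linear_abs_le[OF E2 k3 a1 b1])
  have f4: "\<bar>(lmd - k2*b)*(\<tau>^2*\<sigma>)\<bar> \<le> (L*S)*(\<tau>^2*(\<bar>a\<bar>+b^2))"
  proof -
    have "\<bar>(lmd - k2*b)*(\<tau>^2*\<sigma>)\<bar> = \<bar>lmd - k2*b\<bar>*(\<tau>^2*\<bar>\<sigma>\<bar>)" by (simp add: abs_mult)
    also have "\<dots> \<le> (L*(\<bar>a\<bar>+b^2))*(\<tau>^2*S)" using lm s by (intro mult_mono mult_left_mono) auto
    finally show ?thesis by (simp add: mult_ac)
  qed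
  have L0: "L \<ge> 0" using M by (simp add: L_def)
  have "\<bar>\<tau>^3*Xm - (-\<gamma>/6*b^3 - k2*b*\<tau>^2*\<sigma>)\<bar> \<le> \<epsilon>*\<bar>b\<bar>^3 + (1+\<bar>t0\<bar>)*M*W + (L*S)*(\<tau>^2*(\<bar>a\<bar>+b^2))"
    unfolding eq by (rule order_trans[OF abs_add2_diff_le], intro add_mono f1 f3 f4)
  also have "\<dots> \<le> \<epsilon>*\<bar>b\<bar>^3 + ((1+\<bar>t0\<bar>)*M + L*S)*(W + \<tau>^2*(\<bar>a\<bar> + b^2))"
  proof -
    have c: "(1+\<bar>t0\<bar>)*M \<ge> 0" "L*S \<ge> 0" using M L0 S by auto
    have "W \<ge> 0" "\<tau>^2*(\<bar>a\<bar> + b^2) \<ge> 0" by (auto simp: W_def)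
    then have "(1+\<bar>t0\<bar>)*M*W \<le> (1+\<bar>t0\<bar>)*M*(W + \<tau>^2*(\<bar>a\<bar> + b^2))"
       "(L*S)*(\<tau>^2*(\<bar>a\<bar>+b^2)) \<le> (L*S)*(W + \<tau>^2*(\<bar>a\<bar> + b^2))"
      using c by (auto intro!: mult_left_mono)
    then show ?thesis by (simp add: algebra_simps)
  qed
  finally show ?thesis by (simp add: W_def L_def add.assoc)
qed

lemma tendsto_0_eventually_abs_less:
  fixes f :: "'a \<Rightarrow> real"
  assumes "(f \<longlongrightarrow> 0) F" "e > 0"
  shows "eventually (\<lambda>x. \<bar>f x\<bar> < e) F"
  using tendstoD[OF assms] by (simp add: dist_real_def)

lemma eventually_at_right_0_less:
  assumes "(e::real) > 0"
  shows "eventually (\<lambda>\<tau>. 0 < \<tau> \<and> \<tau> < e) (at_right 0)"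
  unfolding eventually_at_right_field using assms by auto

lemma small_multiplier:
  fixes K e :: real
  assumes "K \<ge> 0" "e > 0"
  obtains d where "0 < d" "d \<le> 1" "K * d \<le> e"
proof
  show "0 < min 1 (e / (K + 1))" "min 1 (e / (K + 1)) \<le> 1"
    using assms by simp_all
  have "K * min 1 (e / (K + 1)) \<le> K * (e / (K + 1))"
    using assms by (intro mult_left_mono) auto
  also have "\<dots> \<le> e"
    using assms by (simp add: field_simps)
  finally show "K * min 1 (e / (K + 1)) \<le> e" .
qed

lemma tendsto_0_by_eventual_bounds:
  fixes f g :: "'a \<Rightarrow> real"
  assumes g: "(g \<longlongrightarrow> 0) F" and f: "\<And>\<epsilon>. \<epsilon> > 0 \<Longrightarrow> eventually (\<lambda>x. \<bar>f x\<bar> \<le> \<epsilon> + g x) F"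
  shows "(f \<longlongrightarrow> 0) F"
proof (rule tendstoI)
  fix e :: real assume "e > 0"
  then have "e / 2 > 0" by simp
  from tendsto_0_eventually_abs_less[OF g this] f[OF this]
  show "eventually (\<lambda>x. dist (f x) 0 < e) F"
    by eventually_elim auto
qed

lemma power2_le_of_less_le_1: "0 \<le> (x::real) \<Longrightarrow> x < m \<Longrightarrow> m \<le> 1 \<Longrightarrow> x^2 \<le> m"
proof -
  assume "0 \<le> x" "x < m" "m \<le> 1"
  then have "x*x \<le> m*1" by (intro mult_mono) auto
  then show ?thesis by (simp add: power2_eq_square)
qed

lemma mult_power4_le_power3: "0 \<le> (\<tau>::real) \<Longrightarrow> \<tau> \<le> 1 \<Longrightarrow> c \<ge> 0 \<Longrightarrow> c*\<tau>^4 \<le> c*\<tau>^3"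
proof -
  assume h: "0 \<le> \<tau>" "\<tau> \<le> 1" "c \<ge> 0"
  have "\<tau>^4 = \<tau>*\<tau>^3" by (simp add: power_numeral_reduce)
  also have "\<dots> \<le> 1*\<tau>^3" using h by (intro mult_right_mono) auto
  finally show ?thesis using h by (intro mult_left_mono) auto
qed

lemma deviation_monomial_bounds:
  fixes A B \<tau> C N :: real
  assumes A: "0 \<le> A" "A \<le> C * \<tau>^2" and B: "0 \<le> B" "B \<le> N * \<tau>" and \<tau>: "0 \<le> \<tau>"
  shows "A * B \<le> C * N * \<tau>^3" "B^3 \<le> N^3 * \<tau>^3" "A^2 \<le> C^2 * \<tau>^4" "A * B^2 \<le> C * N^2 * \<tau>^4"
    and "\<tau>^2 * A \<le> C * \<tau>^4" "\<tau>^2 * B \<le> N * \<tau>^3" "\<tau>^2 * B^2 \<le> N^2 * \<tau>^4"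
proof -
  have "A * B \<le> (C * \<tau>^2) * (N * \<tau>)" using A B by (intro mult_mono) auto
  then show "A * B \<le> C * N * \<tau>^3" by (simp add: power_numeral_reduce mult_ac)
  have "B^3 \<le> (N * \<tau>)^3" using B by (intro power_mono) auto
  then show "B^3 \<le> N^3 * \<tau>^3" by (simp add: power_mult_distrib)
  have "A^2 \<le> (C * \<tau>^2)^2" using A by (intro power_mono) auto
  then show "A^2 \<le> C^2 * \<tau>^4" by (simp add: power_mult_distrib flip: power_mult)
  have B2: "B^2 \<le> (N * \<tau>)^2" using B by (intro power_mono) auto
  then have "A * B^2 \<le> (C * \<tau>^2) * (N * \<tau>)^2" using A by (intro mult_mono) auto
  then show "A * B^2 \<le> C * N^2 * \<tau>^4" by (simp add: power_mult_distrib power_numeral_reduce mult_ac)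
  have "\<tau>^2 * A \<le> \<tau>^2 * (C * \<tau>^2)" using A by (intro mult_left_mono) auto
  then show "\<tau>^2 * A \<le> C * \<tau>^4" by (simp add: power_numeral_reduce mult_ac)
  have "\<tau>^2 * B \<le> \<tau>^2 * (N * \<tau>)" using B by (intro mult_left_mono) auto
  then show "\<tau>^2 * B \<le> N * \<tau>^3" by (simp add: power_numeral_reduce mult_ac)
  have "\<tau>^2 * B^2 \<le> \<tau>^2 * (N * \<tau>)^2" using B2 by (intro mult_left_mono) auto
  then show "\<tau>^2 * B^2 \<le> N^2 * \<tau>^4" by (simp add: power_mult_distrib power_numeral_reduce mult_ac)
qed

text \<open>Bootstrap for the deviations a, b of r_+, r_- along a curve parametrised by \<tau> \<rightarrow> 0+:
  the first hodograph equation, alpha a = \<tau>^2 Xp + (higher order), gives a = O(\<tau>^2 + |b|^3); the cubic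
  term -gamma b^3/6 of the second one then forces b = O(\<tau>), hence a = O(\<tau>^2).\<close>

lemma plus_equation_deviation_bound:
  fixes a b :: "real \<Rightarrow> real"
  assumes \<alpha>: "\<alpha> \<noteq> 0" and K: "K \<ge> 0"
    and a0: "(a \<longlongrightarrow> 0) (at_right 0)" and b0: "(b \<longlongrightarrow> 0) (at_right 0)"
    and H: "eventually (\<lambda>\<tau>. \<bar>\<tau>^2*Xp - \<alpha>*a \<tau>\<bar> \<le> K*(\<bar>a \<tau>\<bar>*\<bar>b \<tau>\<bar> + \<bar>b \<tau>\<bar>^3 + (a \<tau>)^2 + \<bar>a \<tau>\<bar>*(b \<tau>)^2 + \<tau>^2*(\<bar>a \<tau>\<bar>+\<bar>b \<tau>\<bar>))) (at_right 0)"
  shows "\<exists>C\<ge>0. eventually (\<lambda>\<tau>. \<bar>a \<tau>\<bar> \<le> C*(\<tau>^2 + \<bar>b \<tau>\<bar>^3)) (at_right 0)"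
proof -
  obtain m where m: "0 < m" "m \<le> 1" "(4 * K) * m \<le> \<bar>\<alpha>\<bar> / 2"
    using small_multiplier[of "4 * K" "\<bar>\<alpha>\<bar> / 2"] \<alpha> K by auto
  have ev: "eventually (\<lambda>\<tau>. \<bar>a \<tau>\<bar> < m \<and> \<bar>b \<tau>\<bar> < m \<and> 0 < \<tau> \<and> \<tau> < m) (at_right 0)"
    using tendsto_0_eventually_abs_less[OF a0 m(1)] tendsto_0_eventually_abs_less[OF b0 m(1)]
      eventually_at_right_0_less[OF m(1)] by eventually_elim auto
  show ?thesis
  proof (intro exI[of _ "2*(\<bar>Xp\<bar>+K)/\<bar>\<alpha>\<bar>"] conjI, use K in simp, use ev H in eventually_elim)
    case (elim \<tau>)
    define A where "A = \<bar>a \<tau>\<bar>"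
    define B where "B = \<bar>b \<tau>\<bar>"
    have A: "0 \<le> A" "A < m" and B: "0 \<le> B" "B < m" and t: "0 < \<tau>" "\<tau> < m"
      using elim by (auto simp: A_def B_def)
    have "\<tau>^2 \<le> m" "B^2 \<le> m"
      using t B m power2_le_of_less_le_1[of \<tau> m] power2_le_of_less_le_1[of B m] by simp_all
    then have "B + A + B^2 + \<tau>^2 \<le> 4*m" using A B by linarith
    have "K*(A*B + A^2 + A*B^2 + \<tau>^2*A) = K*A*(B + A + B^2 + \<tau>^2)"
      by (simp add: algebra_simps power2_eq_square)
    also have "\<dots> \<le> K*A*(4*m)"
      using \<open>B + A + B^2 + \<tau>^2 \<le> 4*m\<close> K A by (intro mult_left_mono) auto
    also have "\<dots> = A*(4*K*m)" by simp
    also have "\<dots> \<le> A*(\<bar>\<alpha>\<bar>/2)" using m(3) A by (intro mult_left_mono) auto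
    finally have k1: "K*(A*B + A^2 + A*B^2 + \<tau>^2*A) \<le> A*(\<bar>\<alpha>\<bar>/2)" .
    have tB: "\<tau>^2*B \<le> \<tau>^2" using B m by (intro mult_left_le) auto
    have H': "\<bar>\<tau>^2*Xp - \<alpha>*a \<tau>\<bar> \<le> K*(A*B + A^2 + A*B^2 + \<tau>^2*A) + K*(B^3 + \<tau>^2*B)"
      using elim by (simp add: A_def B_def algebra_simps power2_abs)
    have "\<bar>\<alpha>\<bar>*A \<le> \<bar>\<tau>^2*Xp\<bar> + \<bar>\<tau>^2*Xp - \<alpha>*a \<tau>\<bar>"
      by (simp add: A_def abs_mult[symmetric])
    also have "\<bar>\<tau>^2*Xp\<bar> = \<tau>^2*\<bar>Xp\<bar>" by (simp add: abs_mult)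
    finally have "\<bar>\<alpha>\<bar>*A \<le> \<tau>^2*\<bar>Xp\<bar> + A*(\<bar>\<alpha>\<bar>/2) + K*(B^3 + \<tau>^2)"
      using H' k1 tB K by (smt (verit) mult_left_mono)
    moreover have "A*(\<bar>\<alpha>\<bar>/2) = (\<bar>\<alpha>\<bar>*A)/2" by simp
    ultimately have "\<bar>\<alpha>\<bar>*A \<le> 2*(\<tau>^2*\<bar>Xp\<bar>) + 2*(K*(B^3 + \<tau>^2))" by linarith
    also have "\<dots> \<le> 2*(\<bar>Xp\<bar>+K)*(\<tau>^2 + B^3)"
      using K B t by (simp add: algebra_simps mult_nonneg_nonneg)
    finally show ?case using \<alpha> by (simp add: A_def B_def field_simps)
  qed
qed

lemma remainder_le_quartic:
  fixes a b \<tau> C :: real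
  assumes C: "C \<ge> 0" and A: "\<bar>a\<bar> \<le> 2*C*b^2" and \<tau>: "0 \<le> \<tau>" "\<tau> \<le> \<bar>b\<bar>"
  shows "a^2 + \<bar>a\<bar>*b^2 + \<tau>^2*(\<bar>a\<bar> + b^2) \<le> (4*C^2 + 4*C + 1) * \<bar>b\<bar>^4"
proof -
  have t2: "\<tau>^2 \<le> b^2" using \<tau> by (metis abs_ge_zero power2_abs power_mono)
  have "a^2 \<le> (2*C*b^2)^2" using A by (metis abs_ge_zero power2_abs power_mono)
  moreover have "\<bar>a\<bar>*b^2 \<le> (2*C*b^2)*b^2" using A by (intro mult_right_mono) auto
  moreover have "\<tau>^2*\<bar>a\<bar> \<le> b^2*(2*C*b^2)" using A t2 by (intro mult_mono) auto
  moreover have "\<tau>^2*b^2 \<le> b^2*b^2" using t2 by (intro mult_right_mono) auto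
  ultimately show ?thesis
    by (simp add: algebra_simps power_mult_distrib power4_eq_xxxx power2_eq_square abs_mult_self)
qed

lemma minus_equation_forces_linear_bound:
  fixes a b \<tau> \<sigma> :: real
  assumes \<gamma>: "\<gamma> \<noteq> 0" and K: "K \<ge> 0" and C: "C \<ge> 0"
    and N: "N \<ge> 1" "\<bar>Xm\<bar> + \<bar>c\<bar>*S \<le> \<bar>\<gamma>\<bar>/24 * N"
    and small: "K*(4*C^2 + 4*C + 1)*\<bar>b\<bar> \<le> \<bar>\<gamma>\<bar>/24" "\<bar>b\<bar> \<le> 1" and \<tau>: "0 < \<tau>"
    and A: "\<bar>a\<bar> \<le> C*(\<tau>^2 + \<bar>b\<bar>^3)" and \<sigma>: "\<bar>\<sigma>\<bar> \<le> S"
    and E: "\<bar>\<tau>^3*Xm - (-\<gamma>/6*b^3 - c*b*\<tau>^2*\<sigma>)\<bar> \<le> \<bar>\<gamma>\<bar>/24 * \<bar>b\<bar>^3 + K*(a^2 + \<bar>a\<bar>*b^2 + \<tau>^2*(\<bar>a\<bar> + b^2))"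
  shows "\<bar>b\<bar> \<le> N * \<tau>"
proof (rule ccontr)
  define B where "B = \<bar>b\<bar>"
  assume "\<not> \<bar>b\<bar> \<le> N * \<tau>"
  then have NB: "N*\<tau> < B" by (simp add: B_def)
  have "0 < N*\<tau>" using N \<tau> by simp
  then have B: "0 < B" "B \<le> 1" using NB small(2) by (auto simp: B_def)
  have tBN: "\<tau> \<le> B/N" using NB N by (simp add: field_simps)
  have "\<tau> \<le> N*\<tau>" using N \<tau> by simp
  then have tB: "\<tau> \<le> B" using NB by linarith
  have t2: "\<tau>^2 \<le> B^2/N" and t3: "\<tau>^3 \<le> B^3/N"
  proof -
    have "\<tau>*\<tau> \<le> (B/N)*B" using tBN tB \<tau> by (intro mult_mono) auto
    then show t2: "\<tau>^2 \<le> B^2/N" by (simp add: power2_eq_square)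
    have "\<tau>*\<tau>^2 \<le> B*(B^2/N)" using tB t2 \<tau> by (intro mult_mono) auto
    then show "\<tau>^3 \<le> B^3/N" by (simp add: power3_eq_cube power2_eq_square)
  qed
  have "\<tau>^2 \<le> B^2" using tB \<tau> by (intro power_mono) auto
  moreover have "B^3 \<le> B^2" using B by (simp add: power3_eq_cube power2_eq_square mult_left_le)
  ultimately have "C*(\<tau>^2 + B^3) \<le> C*(B^2 + B^2)" using C by (intro mult_left_mono) auto
  then have "\<bar>a\<bar> \<le> 2*C*b^2" using A by (simp add: B_def)
  from remainder_le_quartic[OF C this \<tau>(1)[THEN less_imp_le] tB[unfolded B_def]]
  have "K*(a^2 + \<bar>a\<bar>*b^2 + \<tau>^2*(\<bar>a\<bar> + b^2)) \<le> K*((4*C^2 + 4*C + 1)*B^4)"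
    using K by (intro mult_left_mono) (auto simp: B_def)
  also have "\<dots> = (K*(4*C^2 + 4*C + 1)*B)*B^3" by (simp add: power_numeral_reduce)
  also have "\<dots> \<le> \<bar>\<gamma>\<bar>/24 * B^3" using small(1) B by (intro mult_right_mono) (auto simp: B_def)
  finally have rem: "K*(a^2 + \<bar>a\<bar>*b^2 + \<tau>^2*(\<bar>a\<bar> + b^2)) \<le> \<bar>\<gamma>\<bar>/24 * B^3" .
  have "\<bar>\<tau>^3*Xm\<bar> = \<bar>Xm\<bar>*\<tau>^3" using \<tau> by (simp add: abs_mult)
  also have "\<dots> \<le> \<bar>Xm\<bar>*(B^3/N)" using t3 by (intro mult_left_mono) auto
  finally have x: "\<bar>\<tau>^3*Xm\<bar> \<le> \<bar>Xm\<bar>*(B^3/N)" .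
  have "\<bar>c*b*\<tau>^2*\<sigma>\<bar> = \<bar>c\<bar>*B*(\<tau>^2*\<bar>\<sigma>\<bar>)" by (simp add: abs_mult B_def)
  also have "\<dots> \<le> \<bar>c\<bar>*B*(B^2/N*S)"
    using t2 \<sigma> B N by (intro mult_left_mono mult_mono) auto
  finally have y: "\<bar>c*b*\<tau>^2*\<sigma>\<bar> \<le> \<bar>c\<bar>*S*(B^3/N)"
    by (simp add: power3_eq_cube power2_eq_square mult_ac)
  have "\<bar>Xm\<bar>*(B^3/N) + \<bar>c\<bar>*S*(B^3/N) = (\<bar>Xm\<bar> + \<bar>c\<bar>*S)*(B^3/N)" by (rule distrib_right[symmetric])
  also have "\<dots> \<le> (\<bar>\<gamma>\<bar>/24*N)*(B^3/N)" using N B by (intro mult_right_mono) auto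
  also have "\<dots> = \<bar>\<gamma>\<bar>/24 * B^3" using N by simp
  finally have z: "\<bar>Xm\<bar>*(B^3/N) + \<bar>c\<bar>*S*(B^3/N) \<le> \<bar>\<gamma>\<bar>/24 * B^3" .
  define G where "G = \<bar>\<gamma>\<bar> * B^3"
  have "G > 0" using \<gamma> B by (simp add: G_def)
  moreover have "\<bar>-\<gamma>/6*b^3\<bar> = G/6" by (simp add: G_def B_def abs_mult power_abs)
  moreover have "\<bar>-\<gamma>/6*b^3\<bar> \<le> \<bar>\<tau>^3*Xm\<bar> + \<bar>c*b*\<tau>^2*\<sigma>\<bar> + \<bar>\<tau>^3*Xm - (-\<gamma>/6*b^3 - c*b*\<tau>^2*\<sigma>)\<bar>"
    by (smt (verit))
  moreover have "\<bar>\<tau>^3*Xm - (-\<gamma>/6*b^3 - c*b*\<tau>^2*\<sigma>)\<bar> \<le> G/24 + K*(a^2 + \<bar>a\<bar>*b^2 + \<tau>^2*(\<bar>a\<bar> + b^2))"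
    using E by (simp add: G_def B_def)
  moreover have "K*(a^2 + \<bar>a\<bar>*b^2 + \<tau>^2*(\<bar>a\<bar> + b^2)) \<le> G/24" using rem by (simp add: G_def)
  moreover have "\<bar>Xm\<bar>*(B^3/N) + \<bar>c\<bar>*S*(B^3/N) \<le> G/24" using z by (simp add: G_def)
  ultimately show False using x y by linarith

qed

lemma minus_equation_linear_bound:
  fixes a b \<sigma> :: "real \<Rightarrow> real"
  assumes \<gamma>: "\<gamma> \<noteq> 0" and K: "K \<ge> 0" and C: "C \<ge> 0" and S: "S \<ge> 0"
    and b0: "(b \<longlongrightarrow> 0) (at_right 0)"
    and HA: "eventually (\<lambda>\<tau>. \<bar>a \<tau>\<bar> \<le> C*(\<tau>^2 + \<bar>b \<tau>\<bar>^3)) (at_right 0)"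
    and Hm: "\<And>\<epsilon>. \<epsilon> > 0 \<Longrightarrow> eventually (\<lambda>\<tau>. \<bar>\<tau>^3*Xm - (-\<gamma>/6*(b \<tau>)^3 - c*b \<tau>*\<tau>^2*\<sigma> \<tau>)\<bar>
              \<le> \<epsilon>*\<bar>b \<tau>\<bar>^3 + K*((a \<tau>)^2 + \<bar>a \<tau>\<bar>*(b \<tau>)^2 + \<tau>^2*(\<bar>a \<tau>\<bar> + (b \<tau>)^2))) (at_right 0)"
    and Hs: "eventually (\<lambda>\<tau>. \<bar>\<sigma> \<tau>\<bar> \<le> S) (at_right 0)"
  shows "\<exists>N\<ge>1. eventually (\<lambda>\<tau>. \<bar>b \<tau>\<bar> \<le> N*\<tau>) (at_right 0)"
proof -
  have g: "\<bar>\<gamma>\<bar>/24 > 0" using \<gamma> by simp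
  define N where "N = max 1 (24*(\<bar>Xm\<bar> + \<bar>c\<bar>*S)/\<bar>\<gamma>\<bar>)"
  have N: "N \<ge> 1" "\<bar>Xm\<bar> + \<bar>c\<bar>*S \<le> \<bar>\<gamma>\<bar>/24 * N"
    using \<gamma> by (auto simp: N_def field_simps max_def)
  obtain d where d: "0 < d" "d \<le> 1" "(K*(4*C^2 + 4*C + 1))*d \<le> \<bar>\<gamma>\<bar>/24"
    using small_multiplier[of "K*(4*C^2 + 4*C + 1)" "\<bar>\<gamma>\<bar>/24"] K C g by auto
  show ?thesis
  proof (intro exI[of _ N] conjI N(1))
    show "eventually (\<lambda>\<tau>. \<bar>b \<tau>\<bar> \<le> N*\<tau>) (at_right 0)"
      using tendsto_0_eventually_abs_less[OF b0 d(1)] eventually_at_right_0_less[OF zero_less_one] HA Hm[OF g] Hs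
    proof eventually_elim
      case (elim \<tau>)
      have "K*(4*C^2 + 4*C + 1)*\<bar>b \<tau>\<bar> \<le> K*(4*C^2 + 4*C + 1)*d"
        using elim K C by (intro mult_left_mono) auto
      then have "K*(4*C^2 + 4*C + 1)*\<bar>b \<tau>\<bar> \<le> \<bar>\<gamma>\<bar>/24" using d(3) by linarith
      with elim d show ?case
        by (intro minus_equation_forces_linear_bound[OF \<gamma> K C N]) (auto simp: power2_abs)
    qed
  qed
qed
lemma plus_equation_quadratic_bound:
  fixes a b :: "real \<Rightarrow> real"
  assumes C: "C \<ge> 0" and N: "N \<ge> 1"
    and HA: "eventually (\<lambda>\<tau>. \<bar>a \<tau>\<bar> \<le> C*(\<tau>^2 + \<bar>b \<tau>\<bar>^3)) (at_right 0)"
    and HB: "eventually (\<lambda>\<tau>. \<bar>b \<tau>\<bar> \<le> N*\<tau>) (at_right 0)"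
  shows "eventually (\<lambda>\<tau>. \<bar>a \<tau>\<bar> \<le> (C*(1+N^3))*\<tau>^2) (at_right 0)"
  using HA HB eventually_at_right_0_less[OF zero_less_one]
proof eventually_elim
  case (elim \<tau>)
  have "\<bar>b \<tau>\<bar>^3 \<le> (N*\<tau>)^3" using elim by (intro power_mono) auto
  also have "\<dots> = N^3*(\<tau>*\<tau>^2)" by (simp add: power_mult_distrib power_numeral_reduce)
  also have "\<dots> \<le> N^3*(1*\<tau>^2)" using elim N by (intro mult_left_mono mult_right_mono) auto
  finally have "\<bar>b \<tau>\<bar>^3 \<le> N^3*\<tau>^2" by simp
  then have "C*(\<tau>^2 + \<bar>b \<tau>\<bar>^3) \<le> C*(\<tau>^2 + N^3*\<tau>^2)" using C by (intro mult_left_mono) auto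
  then show ?case using elim by (simp add: algebra_simps)
qed

lemma plus_equation_limit:
  fixes a b :: "real \<Rightarrow> real"
  assumes \<alpha>: "\<alpha> \<noteq> 0" and K: "K \<ge> 0" and Ca: "Ca \<ge> 0" and N: "N \<ge> 1"
    and HA: "eventually (\<lambda>\<tau>. \<bar>a \<tau>\<bar> \<le> Ca*\<tau>^2) (at_right 0)"
    and HB: "eventually (\<lambda>\<tau>. \<bar>b \<tau>\<bar> \<le> N*\<tau>) (at_right 0)"
    and H: "eventually (\<lambda>\<tau>. \<bar>\<tau>^2*Xp - \<alpha>*a \<tau>\<bar> \<le> K*(\<bar>a \<tau>\<bar>*\<bar>b \<tau>\<bar> + \<bar>b \<tau>\<bar>^3 + (a \<tau>)^2 + \<bar>a \<tau>\<bar>*(b \<tau>)^2 + \<tau>^2*(\<bar>a \<tau>\<bar>+\<bar>b \<tau>\<bar>))) (at_right 0)"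
  shows "((\<lambda>\<tau>. a \<tau> / \<tau>^2) \<longlongrightarrow> Xp/\<alpha>) (at_right 0)"
proof -
  define Q where "Q = Ca*N + N^3 + Ca^2 + Ca*N^2 + Ca + N"
  have ev: "eventually (\<lambda>\<tau>. \<bar>a \<tau>/\<tau>^2 - Xp/\<alpha>\<bar> \<le> K*Q/\<bar>\<alpha>\<bar>*\<tau>) (at_right 0)"
    using HA HB H eventually_at_right_0_less[OF zero_less_one]
  proof eventually_elim
    case (elim \<tau>)
    then have t: "0 < \<tau>" "\<tau> < 1" by auto
    have "\<bar>a \<tau>\<bar> \<le> Ca*\<tau>^2" "\<bar>b \<tau>\<bar> \<le> N*\<tau>" using elim by auto
    note m = deviation_monomial_bounds[OF abs_ge_zero this(1) abs_ge_zero this(2) less_imp_le[OF t(1)]]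
    have "Ca^2*\<tau>^4 \<le> Ca^2*\<tau>^3" "Ca*N^2*\<tau>^4 \<le> Ca*N^2*\<tau>^3" "Ca*\<tau>^4 \<le> Ca*\<tau>^3"
      using t Ca by (auto intro!: mult_power4_le_power3)
    with m have "\<bar>a \<tau>\<bar>*\<bar>b \<tau>\<bar> + \<bar>b \<tau>\<bar>^3 + \<bar>a \<tau>\<bar>^2 + \<bar>a \<tau>\<bar>*\<bar>b \<tau>\<bar>^2 + \<tau>^2*(\<bar>a \<tau>\<bar>+\<bar>b \<tau>\<bar>)
        \<le> Ca*N*\<tau>^3 + N^3*\<tau>^3 + Ca^2*\<tau>^3 + Ca*N^2*\<tau>^3 + Ca*\<tau>^3 + N*\<tau>^3"
      unfolding distrib_left by linarith
    also have "\<dots> = Q*\<tau>^3" by (simp add: Q_def algebra_simps)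
    finally have "K*(\<bar>a \<tau>\<bar>*\<bar>b \<tau>\<bar> + \<bar>b \<tau>\<bar>^3 + \<bar>a \<tau>\<bar>^2 + \<bar>a \<tau>\<bar>*\<bar>b \<tau>\<bar>^2 + \<tau>^2*(\<bar>a \<tau>\<bar>+\<bar>b \<tau>\<bar>))
        \<le> K*(Q*\<tau>^3)" using K by (rule mult_left_mono)
    then have main: "\<bar>\<tau>^2*Xp - \<alpha>*a \<tau>\<bar> \<le> K*Q*\<tau>^3" using elim by (simp add: mult.assoc)
    have "a \<tau>/\<tau>^2 - Xp/\<alpha> = -(\<tau>^2*Xp - \<alpha>*a \<tau>)/(\<alpha>*\<tau>^2)" using t \<alpha> by (simp add: field_simps)
    then have "\<bar>a \<tau>/\<tau>^2 - Xp/\<alpha>\<bar> = \<bar>\<tau>^2*Xp - \<alpha>*a \<tau>\<bar>/(\<bar>\<alpha>\<bar>*\<tau>^2)" by (simp add: abs_mult abs_minus_commute)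
    also have "\<dots> \<le> K*Q*\<tau>^3/(\<bar>\<alpha>\<bar>*\<tau>^2)" using main t \<alpha> by (intro divide_right_mono) auto
    also have "\<dots> = K*Q/\<bar>\<alpha>\<bar>*\<tau>" using t \<alpha> by (simp add: field_simps power_numeral_reduce)
    finally show ?case .
  qed
  have "((\<lambda>\<tau>. (K*Q/\<bar>\<alpha>\<bar>)*\<tau>) \<longlongrightarrow> 0) (at_right 0)"
    by (intro tendsto_mult_right_zero tendsto_ident_at)
  then have "((\<lambda>\<tau>. a \<tau>/\<tau>^2 - Xp/\<alpha>) \<longlongrightarrow> 0) (at_right 0)"
    by (rule Lim_null_comparison[rotated]) (use ev in simp)
  then show ?thesis by (simp add: LIM_zero_iff)
qed

lemma minus_equation_limit:
  fixes a b \<sigma> :: "real \<Rightarrow> real"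
  assumes K: "K \<ge> 0" and Ca: "Ca \<ge> 0" and N: "N \<ge> 1"
    and HA: "eventually (\<lambda>\<tau>. \<bar>a \<tau>\<bar> \<le> Ca*\<tau>^2) (at_right 0)"
    and HB: "eventually (\<lambda>\<tau>. \<bar>b \<tau>\<bar> \<le> N*\<tau>) (at_right 0)"
    and Hm: "\<And>\<epsilon>. \<epsilon> > 0 \<Longrightarrow> eventually (\<lambda>\<tau>. \<bar>\<tau>^3*Xm - (-\<gamma>/6*(b \<tau>)^3 - c*b \<tau>*\<tau>^2*\<sigma> \<tau>)\<bar>
              \<le> \<epsilon>*\<bar>b \<tau>\<bar>^3 + K*((a \<tau>)^2 + \<bar>a \<tau>\<bar>*(b \<tau>)^2 + \<tau>^2*(\<bar>a \<tau>\<bar> + (b \<tau>)^2))) (at_right 0)"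
    and Hs: "(\<sigma> \<longlongrightarrow> \<sigma>0) (at_right 0)"
  shows "((\<lambda>\<tau>. -\<gamma>/6*(b \<tau>/\<tau>)^3 - c*\<sigma>0*(b \<tau>/\<tau>)) \<longlongrightarrow> Xm) (at_right 0)"
proof -
  define Q where "Q = Ca^2 + Ca*N^2 + Ca + N^2"
  define E where "E \<tau> = Xm - (-\<gamma>/6*(b \<tau>/\<tau>)^3 - c*(b \<tau>/\<tau>)*\<sigma> \<tau>)" for \<tau>
  have "(E \<longlongrightarrow> 0) (at_right 0)"
  proof (rule tendsto_0_by_eventual_bounds)
    show "((\<lambda>\<tau>. K*Q*\<tau>) \<longlongrightarrow> 0) (at_right 0)"
      by (intro tendsto_mult_right_zero tendsto_ident_at)
    fix \<epsilon> :: real assume "\<epsilon> > 0"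
    then have "\<epsilon> / N^3 > 0" using N by simp
    show "eventually (\<lambda>\<tau>. \<bar>E \<tau>\<bar> \<le> \<epsilon> + K*Q*\<tau>) (at_right 0)"
      using HA HB Hm[OF \<open>\<epsilon> / N^3 > 0\<close>] eventually_at_right_0_less[OF zero_less_one]
    proof eventually_elim
      case (elim \<tau>)
      then have t: "0 < \<tau>" by auto
      have "\<bar>a \<tau>\<bar> \<le> Ca*\<tau>^2" "\<bar>b \<tau>\<bar> \<le> N*\<tau>" using elim by auto
      note m = deviation_monomial_bounds[OF abs_ge_zero this(1) abs_ge_zero this(2) less_imp_le[OF t]]
      have "\<epsilon> / N^3 * \<bar>b \<tau>\<bar>^3 \<le> \<epsilon> / N^3 * (N^3 * \<tau>^3)"
        using m(2) \<open>\<epsilon> / N^3 > 0\<close> by (intro mult_left_mono) auto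
      also have "\<dots> = \<epsilon> * \<tau>^3" using N by simp
      finally have "\<epsilon> / N^3 * \<bar>b \<tau>\<bar>^3 \<le> \<epsilon> * \<tau>^3" .
      moreover have "\<bar>a \<tau>\<bar>^2 + \<bar>a \<tau>\<bar>*\<bar>b \<tau>\<bar>^2 + \<tau>^2*(\<bar>a \<tau>\<bar> + \<bar>b \<tau>\<bar>^2) \<le> Q*\<tau>^4"
        using m unfolding Q_def distrib_left distrib_right by linarith
      then have "K*(\<bar>a \<tau>\<bar>^2 + \<bar>a \<tau>\<bar>*\<bar>b \<tau>\<bar>^2 + \<tau>^2*(\<bar>a \<tau>\<bar> + \<bar>b \<tau>\<bar>^2)) \<le> K*(Q*\<tau>^4)"
        using K by (rule mult_left_mono)
      ultimately have "\<bar>\<tau>^3*Xm - (-\<gamma>/6*(b \<tau>)^3 - c*b \<tau>*\<tau>^2*\<sigma> \<tau>)\<bar> \<le> (\<epsilon> + K*Q*\<tau>)*\<tau>^3"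
        using elim by (simp add: algebra_simps power_numeral_reduce)
      moreover have "E \<tau> = (\<tau>^3*Xm - (-\<gamma>/6*(b \<tau>)^3 - c*b \<tau>*\<tau>^2*\<sigma> \<tau>)) / \<tau>^3"
        using t by (simp add: E_def field_simps power_numeral_reduce)
      ultimately show ?case
        using t by (simp add: abs_divide pos_divide_le_eq)
    qed
  qed
  moreover have "((\<lambda>\<tau>. c*(b \<tau>/\<tau>)*(\<sigma> \<tau> - \<sigma>0)) \<longlongrightarrow> 0) (at_right 0)"
  proof (rule Lim_null_comparison)
    show "eventually (\<lambda>\<tau>. norm (c*(b \<tau>/\<tau>)*(\<sigma> \<tau> - \<sigma>0)) \<le> \<bar>c\<bar>*N*\<bar>\<sigma> \<tau> - \<sigma>0\<bar>) (at_right 0)"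
      using HB eventually_at_right_0_less[OF zero_less_one]
    proof eventually_elim
      case (elim \<tau>)
      then have "\<bar>b \<tau>/\<tau>\<bar> \<le> N" by (simp add: abs_divide field_simps)
      then have "\<bar>c\<bar>*\<bar>b \<tau>/\<tau>\<bar>*\<bar>\<sigma> \<tau> - \<sigma>0\<bar> \<le> \<bar>c\<bar>*N*\<bar>\<sigma> \<tau> - \<sigma>0\<bar>"
        by (intro mult_right_mono mult_left_mono) auto
      then show ?case by (simp only: real_norm_def abs_mult)
    qed
    have "((\<lambda>\<tau>. \<sigma> \<tau> - \<sigma>0) \<longlongrightarrow> 0) (at_right 0)" using Hs by (simp add: LIM_zero_iff)
    then show "((\<lambda>\<tau>. \<bar>c\<bar>*N*\<bar>\<sigma> \<tau> - \<sigma>0\<bar>) \<longlongrightarrow> 0) (at_right 0)"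
      by (intro tendsto_mult_right_zero tendsto_rabs_zero)
  qed
  ultimately have lim: "((\<lambda>\<tau>. Xm - E \<tau> + c*(b \<tau>/\<tau>)*(\<sigma> \<tau> - \<sigma>0)) \<longlongrightarrow> Xm - 0 + 0) (at_right 0)"
    by (intro tendsto_intros)
  have eq: "Xm - (Xm - (-\<gamma>/6*\<rho>^3 - c*\<rho>*w)) + c*\<rho>*(w - \<sigma>0) = -\<gamma>/6*\<rho>^3 - c*\<sigma>0*\<rho>" for \<rho> w :: real
    by (simp add: algebra_simps)
  show ?thesis using lim[unfolded E_def eq] by simp
qed

section \<open>The rescaling k = \<tau>^3\<close>

lemma powr_one_third_powers:
  fixes k :: real
  assumes "k > 0"
  shows "(k powr (1/3))^2 = k powr (2/3)" "(k powr (1/3))^3 = k"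
proof -
  have p: "(k powr (1/3))^n = k powr (real n/3)" for n :: nat
    using assms by (simp add: powr_realpow[symmetric] powr_powr)
  show "(k powr (1/3))^2 = k powr (2/3)" using p[of 2] by simp
  show "(k powr (1/3))^3 = k" using p[of 3] assms by simp
qed

lemma cube_powr_thirds:
  fixes \<tau> :: real
  assumes "\<tau> > 0"
  shows "(\<tau>^3) powr (2/3) = \<tau>^2" "(\<tau>^3) powr - (2/3) = 1 / \<tau>^2" "(\<tau>^3) powr - (1/3) = 1 / \<tau>"
proof -
  have p: "(\<tau>^3) powr a = \<tau> powr (3 * a)" for a
    using assms by (simp add: powr_powr flip: powr_numeral)
  show "(\<tau>^3) powr (2/3) = \<tau>^2" using assms by (simp add: p powr_numeral)
  show "(\<tau>^3) powr - (2/3) = 1 / \<tau>^2" using assms by (simp add: p powr_minus_divide powr_numeral)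
  show "(\<tau>^3) powr - (1/3) = 1 / \<tau>" using assms by (simp add: p powr_minus_divide)
qed

lemma filterlim_powr_one_third: "filterlim (\<lambda>k::real. k powr (1/3)) (at_right 0) (at_right 0)"
proof -
  have "((\<lambda>k::real. k powr (1/3)) \<longlongrightarrow> 0) (at_right 0)"
    by (rule tendsto_zero_powrI) (auto simp: eventually_at_right_field intro: tendsto_ident_at exI[of _ 1])
  moreover have "eventually (\<lambda>k::real. k powr (1/3) \<in> {0<..}) (at_right 0)"
    unfolding eventually_at_right_field by (auto intro: exI[of _ 1])
  ultimately show ?thesis unfolding filterlim_at by (auto elim: eventually_mono)
qed

lemma tendsto_within_cube_substitution:
  fixes f g :: "real \<Rightarrow> real"
  assumes f: "(f \<longlongrightarrow> L) (at_right 0)" and S: "S \<subseteq> {0<..}"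
    and g: "\<And>\<tau>. \<tau> > 0 \<Longrightarrow> g (\<tau>^3) = f \<tau>"
  shows "(g \<longlongrightarrow> L) (at 0 within S)"
proof -
  have "((\<lambda>k. f (k powr (1/3))) \<longlongrightarrow> L) (at_right 0)"
    by (rule filterlim_compose[OF f filterlim_powr_one_third])
  moreover have "f (k powr (1/3)) = g k" if "k > 0" for k
    using g[of "k powr (1/3)"] powr_one_third_powers(2)[OF that] that by simp
  then have "eventually (\<lambda>k. f (k powr (1/3)) = g k) (at_right 0)"
    unfolding eventually_at_right_field by (intro exI[of _ 1]) auto
  ultimately have "(g \<longlongrightarrow> L) (at_right 0)" by (rule Lim_transform_eventually)
  then show ?thesis using S by (rule tendsto_within_subset)
qed

lemma scaling_region_empty_near_0:
  fixes Xp Xm \<Delta> :: real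
  assumes Xp: "Xp > 0" and \<Delta>: "\<Delta> > 0"
  shows "at 0 within {k. 0 < k \<and> (k powr (2/3) * Xp - k * Xm) / \<Delta> < 0} = bot"
proof -
  define c where "c = Xp / (\<bar>Xm\<bar> + 1)"
  have c: "c > 0" using Xp by (simp add: c_def)
  have "c * \<bar>Xm\<bar> \<le> Xp"
    using Xp by (simp add: c_def field_simps)
  have "\<not> (k powr (2/3) * Xp - k * Xm) / \<Delta> < 0" if k: "0 < k" "k < c^3" for k
  proof -
    define \<tau> where "\<tau> = k powr (1/3)"
    have \<tau>: "\<tau> > 0" "k powr (2/3) = \<tau>^2" "k = \<tau>^3"
      using k powr_one_third_powers[OF k(1)] by (simp_all add: \<tau>_def)
    have "\<tau> < c"
      using k(2) \<tau> c by (metis power_less_imp_less_base less_eq_real_def)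
    then have "\<tau> * \<bar>Xm\<bar> \<le> Xp"
      using \<open>c * \<bar>Xm\<bar> \<le> Xp\<close> by (smt (verit) mult_right_mono abs_ge_zero)
    then have "0 \<le> \<tau>^2 * (Xp - \<tau> * Xm)"
      by (smt (verit) abs_ge_self mult_left_mono \<tau>(1) zero_le_power2 mult_nonneg_nonneg)
    then show ?thesis
      using \<Delta> \<tau> by (simp add: divide_less_0_iff algebra_simps power_numeral_reduce)
  qed
  then have "eventually (\<lambda>k. False) (at 0 within {k. 0 < k \<and> (k powr (2/3) * Xp - k * Xm) / \<Delta> < 0})"
    unfolding eventually_at using c by (intro exI[of _ "c^3"]) (auto simp: dist_real_def)
  then show ?thesis
    by (simp add: eventually_False)
qed

section \<open>Solutions near a generic gradient catastrophe\<close>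

lemma hodograph_difference_identity:
  fixes x l t m x0 l0 t0 m0 d X :: real
  assumes "x + l*t = m" "x0 + l0*t0 = m0" "t = t0 + d" "x = x0 + X - l0*d"
  shows "X = (m - m0) - t0*(l - l0) - (l - l0)*d"
proof -
  have "m - m0 = x + l*t - (x0 + l0*t0)" using assms(1,2) by simp
  also have "\<dots> = X + t0*(l - l0) + (l - l0)*d" unfolding assms(3,4) by (simp add: algebra_simps)
  finally show ?thesis by simp
qed

locale hodograph_catastrophe =
  fixes lp lm mp mm :: "real \<Rightarrow> real \<Rightarrow> real"
    and V D :: "(real \<times> real) set"
    and rP rM :: "real \<Rightarrow> real \<Rightarrow> real"
    and x0 t0 \<delta> r0p r0m :: real
  assumes V_open: "open V"
    and lam_smooth: "smooth_on V lp" "smooth_on V lm"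
    and mu_smooth: "smooth_on V mp" "smooth_on V mm"
    and mu_eqs: "\<forall>(a, b)\<in>V.
        pd2 mp a b = (mp a b - mm a b) / (lp a b - lm a b) * pd2 lp a b \<and>
        pd1 mm a b = (mp a b - mm a b) / (lp a b - lm a b) * pd1 lm a b"
    and r0_in: "(r0p, r0m) \<in> V"
    and speeds_ordered: "lm r0p r0m < lp r0p r0m"
    and delta_pos: "\<delta> > 0"
    and D_eq: "D = {p. dist p (x0, t0) < \<delta> \<and> snd p < t0}"
    and hodograph: "\<forall>(x, t)\<in>D.
        x + lp (rP x t) (rM x t) * t = mp (rP x t) (rM x t) \<and>
        x + lm (rP x t) (rM x t) * t = mm (rP x t) (rM x t)"
    and rM_cont: "continuous_on D (\<lambda>p. rM (fst p) (snd p))"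
    and r_lim: "((\<lambda>p. rP (fst p) (snd p)) \<longlongrightarrow> r0p) (at (x0, t0) within D)"
               "((\<lambda>p. rM (fst p) (snd p)) \<longlongrightarrow> r0m) (at (x0, t0) within D)"
    and cat1: "pd2 mm r0p r0m - t0 * pd2 lm r0p r0m = 0"
    and cat2: "pd2 (pd2 mm) r0p r0m - t0 * pd2 (pd2 lm) r0p r0m = 0"
    and gen2: "pd1 mp r0p r0m - t0 * pd1 lp r0p r0m \<noteq> 0"
    and gen3: "pd2 (pd2 (pd2 mm)) r0p r0m - t0 * pd2 (pd2 (pd2 lm)) r0p r0m \<noteq> 0"
begin

abbreviation \<Delta> :: real where "\<Delta> \<equiv> lp r0p r0m - lm r0p r0m"
abbreviation \<alpha> :: real where "\<alpha> \<equiv> pd1 mp r0p r0m - t0 * pd1 lp r0p r0m"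
abbreviation \<beta> :: real where "\<beta> \<equiv> - pd2 lm r0p r0m / \<Delta>"
abbreviation \<gamma> :: real where
  "\<gamma> \<equiv> - pd2 (pd2 (pd2 mm)) r0p r0m + t0 * pd2 (pd2 (pd2 lm)) r0p r0m"

lemma Delta_pos: "\<Delta> > 0"
  using speeds_ordered by simp

lemma speeds_distinct: "lp r0p r0m \<noteq> lm r0p r0m"
  using speeds_ordered by simp

lemma Delta_nonzero: "\<Delta> \<noteq> 0"
  using speeds_ordered by simp

lemma isCont_at_r0:
  assumes "smooth_on V f"
  shows "isCont (\<lambda>q. pds ds f (fst q) (snd q)) (r0p, r0m)"
  using smooth_on_isCont[OF assms V_open r0_in] .

lemma tendsto_at_r0:
  assumes "smooth_on V g" "(A \<longlongrightarrow> r0p) F" "(B \<longlongrightarrow> r0m) F"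
  shows "((\<lambda>\<tau>. g (A \<tau>) (B \<tau>)) \<longlongrightarrow> g r0p r0m) F"
  using isCont_tendsto_compose[OF isCont_at_r0[OF assms(1), of "[]"] tendsto_Pair[OF assms(2,3)]]
  by simp

lemma tendsto_r_along:
  assumes "filterlim \<pi> (at (x0, t0) within D) F"
  shows "((\<lambda>\<tau>. rP (fst (\<pi> \<tau>)) (snd (\<pi> \<tau>))) \<longlongrightarrow> r0p) F"
    and "((\<lambda>\<tau>. rM (fst (\<pi> \<tau>)) (snd (\<pi> \<tau>))) \<longlongrightarrow> r0m) F"
  using filterlim_compose[OF r_lim(1) assms] filterlim_compose[OF r_lim(2) assms] by simp_all

text \<open>The hodograph equations pass to the limit along the vertical segment below (x0, t0).\<close>

lemma hodograph_at_r0: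
  "x0 + lp r0p r0m * t0 = mp r0p r0m" "x0 + lm r0p r0m * t0 = mm r0p r0m"
proof -
  define \<nu> where "\<nu> \<tau> = (x0, t0 - \<tau>)" for \<tau> :: real
  have \<nu>D: "eventually (\<lambda>\<tau>. \<nu> \<tau> \<in> D \<and> \<nu> \<tau> \<noteq> (x0, t0)) (at_right 0)"
    unfolding eventually_at_right_field using delta_pos
    by (intro exI[of _ \<delta>]) (auto simp: \<nu>_def D_eq dist_Pair_Pair dist_real_def)
  have "(\<nu> \<longlongrightarrow> (x0, t0)) (at_right 0)"
    unfolding \<nu>_def by (auto intro!: tendsto_eq_intros)
  with \<nu>D have "filterlim \<nu> (at (x0, t0) within D) (at_right 0)"
    by (simp add: filterlim_at)
  from tendsto_r_along[OF this]
  have A: "((\<lambda>\<tau>. rP x0 (t0 - \<tau>)) \<longlongrightarrow> r0p) (at_right 0)"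
    and B: "((\<lambda>\<tau>. rM x0 (t0 - \<tau>)) \<longlongrightarrow> r0m) (at_right 0)"
    by (simp_all add: \<nu>_def)
  have t: "((\<lambda>\<tau>. t0 - \<tau>) \<longlongrightarrow> t0) (at_right (0::real))"
    by (auto intro!: tendsto_eq_intros)
  have eq: "x0 + l r0p r0m * t0 = m r0p r0m"
    if "smooth_on V l" "smooth_on V m" "eventually (\<lambda>\<tau>. x0 + l (rP x0 (t0 - \<tau>)) (rM x0 (t0 - \<tau>)) * (t0 - \<tau>)
        = m (rP x0 (t0 - \<tau>)) (rM x0 (t0 - \<tau>))) (at_right 0)" for l m
  proof -
    have "((\<lambda>\<tau>. x0 + l (rP x0 (t0 - \<tau>)) (rM x0 (t0 - \<tau>)) * (t0 - \<tau>)) \<longlongrightarrow> x0 + l r0p r0m * t0) (at_right 0)"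
      by (intro tendsto_intros tendsto_at_r0[OF that(1) A B] t)
    moreover have "((\<lambda>\<tau>. x0 + l (rP x0 (t0 - \<tau>)) (rM x0 (t0 - \<tau>)) * (t0 - \<tau>)) \<longlongrightarrow> m r0p r0m) (at_right 0)"
      by (rule Lim_transform_eventually[OF tendsto_at_r0[OF that(2) A B]])
        (use that(3) in \<open>auto elim: eventually_mono\<close>)
    ultimately show ?thesis
      by (rule tendsto_unique[OF trivial_limit_at_right_real])
  qed
  show "x0 + lp r0p r0m * t0 = mp r0p r0m"
    by (rule eq[OF lam_smooth(1) mu_smooth(1)], use \<nu>D in eventually_elim, use hodograph in \<open>auto simp: \<nu>_def\<close>)
  show "x0 + lm r0p r0m * t0 = mm r0p r0m"
    by (rule eq[OF lam_smooth(2) mu_smooth(2)], use \<nu>D in eventually_elim, use hodograph in \<open>auto simp: \<nu>_def\<close>)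
qed

lemma mu_difference_at_r0: "mp r0p r0m - mm r0p r0m = t0 * \<Delta>"
  using hodograph_at_r0 by (simp add: algebra_simps)

lemma mu_gap_at_r0: "(mp r0p r0m - mm r0p r0m) / \<Delta> = t0"
  using mu_difference_at_r0 speeds_distinct by simp

lemma catastrophe_conditions:
  "pd2 mm r0p r0m = t0 * pd2 lm r0p r0m" "pd2 (pd2 mm) r0p r0m = t0 * pd2 (pd2 lm) r0p r0m"
  using cat1 cat2 by simp_all

lemma compatibility_first_order:
  "pd2 mp r0p r0m = t0 * pd2 lp r0p r0m" "pd1 mm r0p r0m = t0 * pd1 lm r0p r0m"
  using mu_eqs r0_in mu_gap_at_r0 by auto

text \<open>Along r_+ = r0p the coefficient (mp - mm)/(lp - lm) of mu_eqs equals t0 at r0 and, by cat1,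
  has derivative 0 there; so differentiating mu_eqs once in r_- keeps the factor t0.\<close>

lemma deriv_snd_eq_t0_mult:
  assumes eq: "\<And>y. (r0p, y) \<in> V \<Longrightarrow> A y = (mp r0p y - mm r0p y) / (lp r0p y - lm r0p y) * B y"
    and dA: "(A has_real_derivative A') (at r0m)" and dB: "(B has_real_derivative B') (at r0m)"
  shows "A' = t0 * B'"
proof -
  define Q where "Q y = (mp r0p y - mm r0p y) / (lp r0p y - lm r0p y)" for y
  have d: "((\<lambda>y. f r0p y) has_real_derivative pd2 f r0p r0m) (at r0m)" if "smooth_on V f" for f
    using smooth_on_has_real_derivative_snd[OF that r0_in, of "[]"] by simp
  have "(Q has_real_derivative ((pd2 mp r0p r0m - pd2 mm r0p r0m) * \<Delta>
      - (mp r0p r0m - mm r0p r0m) * (pd2 lp r0p r0m - pd2 lm r0p r0m)) / (\<Delta> * \<Delta>)) (at r0m)"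
    unfolding Q_def[abs_def]
    by (rule DERIV_divide[OF DERIV_diff[OF d[OF mu_smooth(1)] d[OF mu_smooth(2)]]
          DERIV_diff[OF d[OF lam_smooth(1)] d[OF lam_smooth(2)]] Delta_nonzero])
  moreover have "(pd2 mp r0p r0m - pd2 mm r0p r0m) * \<Delta> = (mp r0p r0m - mm r0p r0m) * (pd2 lp r0p r0m - pd2 lm r0p r0m)"
    unfolding mu_difference_at_r0 compatibility_first_order(1) catastrophe_conditions(1)
    by (simp add: algebra_simps)
  ultimately have dQ: "(Q has_real_derivative 0) (at r0m)"
    by simp
  have "((\<lambda>y. Q y * B y) has_real_derivative t0 * B') (at r0m)"
    using DERIV_mult[OF dQ dB] mu_gap_at_r0 by (simp add: Q_def mult.commute)
  moreover have "open (Pair r0p -` V)"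
    using V_open by (intro open_vimage continuous_intros)
  ultimately have "(A has_real_derivative t0 * B') (at r0m)"
    by (rule has_field_derivative_transform_within_open) (use r0_in eq in \<open>auto simp: Q_def\<close>)
  then show ?thesis
    using DERIV_unique dA by blast
qed

lemma compatibility_second_order:
  "pd2 (pd2 mp) r0p r0m = t0 * pd2 (pd2 lp) r0p r0m"
  "pd2 (pd1 mm) r0p r0m = t0 * pd2 (pd1 lm) r0p r0m"
proof -
  have d: "(pd2 f r0p has_real_derivative pd2 (pd2 f) r0p r0m) (at r0m)"
    "(pd1 f r0p has_real_derivative pd2 (pd1 f) r0p r0m) (at r0m)" if "smooth_on V f" for f
    using smooth_on_has_real_derivative_snd[OF that r0_in, of "[True]"]
      smooth_on_has_real_derivative_snd[OF that r0_in, of "[False]"] by simp_all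
  have eqs: "pd2 mp r0p y = (mp r0p y - mm r0p y) / (lp r0p y - lm r0p y) * pd2 lp r0p y"
    "pd1 mm r0p y = (mp r0p y - mm r0p y) / (lp r0p y - lm r0p y) * pd1 lm r0p y"
    if "(r0p, y) \<in> V" for y
    using mu_eqs that by auto
  show "pd2 (pd2 mp) r0p r0m = t0 * pd2 (pd2 lp) r0p r0m"
    by (rule deriv_snd_eq_t0_mult[OF eqs(1) d(1)[OF mu_smooth(1)] d(1)[OF lam_smooth(1)]])
  show "pd2 (pd1 mm) r0p r0m = t0 * pd2 (pd1 lm) r0p r0m"
    by (rule deriv_snd_eq_t0_mult[OF eqs(2) d(2)[OF mu_smooth(2)] d(2)[OF lam_smooth(2)]])
qed

lemma taylor_expansion_at_r0:
  obtains \<eta> M where "\<eta> > 0" "M \<ge> 0"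
    and "\<And>f a b. f \<in> {mp, mm, lp, lm} \<Longrightarrow> \<bar>a\<bar> < \<eta> \<Longrightarrow> \<bar>b\<bar> < \<eta> \<Longrightarrow>
      \<exists>\<theta>. \<bar>\<theta>\<bar> \<le> \<bar>b\<bar> \<and> \<bar>f (r0p + a) (r0m + b) - f r0p r0m - (a * pd1 f r0p r0m + a * b * pd2 (pd1 f) r0p r0m
        + b * pd2 f r0p r0m + b^2/2 * pd2 (pd2 f) r0p r0m + b^3/6 * pd2 (pd2 (pd2 f)) r0p (r0m + \<theta>))\<bar>
        \<le> M * (a^2 + \<bar>a\<bar> * b^2)"
    and "\<And>f \<theta>. f \<in> {mp, mm, lp, lm} \<Longrightarrow> \<bar>\<theta>\<bar> < \<eta> \<Longrightarrow> \<bar>pd2 (pd2 (pd2 f)) r0p (r0m + \<theta>)\<bar> \<le> M"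
proof -
  define g where "g q = (\<Sum>f\<in>{mp, mm, lp, lm}. \<bar>pd1 (pd1 f) (fst q) (snd q)\<bar>
      + \<bar>pd2 (pd2 (pd1 f)) (fst q) (snd q)\<bar> + \<bar>pd2 (pd2 (pd2 f)) (fst q) (snd q)\<bar>)" for q
  have sm: "smooth_on V f" if "f \<in> {mp, mm, lp, lm}" for f
    using that lam_smooth mu_smooth by auto
  have "isCont (\<lambda>q. pds ds f (fst q) (snd q)) (r0p, r0m)" if "f \<in> {mp, mm, lp, lm}" for f ds
    using isCont_at_r0[OF sm[OF that]] .
  from this[of _ "[False, False]"] this[of _ "[True, True, False]"] this[of _ "[True, True, True]"]
  have "isCont g (r0p, r0m)"
    unfolding g_def by (intro continuous_intros) auto
  then obtain e where e: "e > 0" "\<And>q. dist q (r0p, r0m) < e \<Longrightarrow> \<bar>g q - g (r0p, r0m)\<bar> < 1"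
    unfolding continuous_at_eps_delta dist_real_def by (meson zero_less_one)
  obtain eV where eV: "eV > 0" "ball (r0p, r0m) eV \<subseteq> V"
    using V_open r0_in open_contains_ball by blast
  define \<eta> where "\<eta> = min e eV / 2"
  define M where "M = g (r0p, r0m) + 1"
  have close: "dist (x, y) (r0p, r0m) < min e eV" if "\<bar>x - r0p\<bar> < \<eta>" "\<bar>y - r0m\<bar> < \<eta>" for x y
    using dist_Pair_le_abs_sum[of x y r0p r0m] that by (simp add: \<eta>_def)
  have box: "(x, y) \<in> V" if "\<bar>x - r0p\<bar> < \<eta>" "\<bar>y - r0m\<bar> < \<eta>" for x y
    using close[OF that] eV(2) by (auto simp: dist_commute subset_eq)
  have bound: "\<bar>pd1 (pd1 f) x y\<bar> \<le> M \<and> \<bar>pd2 (pd2 (pd1 f)) x y\<bar> \<le> M \<and> \<bar>pd2 (pd2 (pd2 f)) x y\<bar> \<le> M"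
    if f: "f \<in> {mp, mm, lp, lm}" and xy: "\<bar>x - r0p\<bar> < \<eta>" "\<bar>y - r0m\<bar> < \<eta>" for f x y
  proof -
    have "\<bar>pd1 (pd1 f) x y\<bar> + \<bar>pd2 (pd2 (pd1 f)) x y\<bar> + \<bar>pd2 (pd2 (pd2 f)) x y\<bar> \<le> g (x, y)"
      unfolding g_def fst_conv snd_conv by (rule member_le_sum[where i = f]) (use f in auto)
    moreover have "g (x, y) < M"
      using e(2)[of "(x, y)"] close[OF xy] by (simp add: M_def)
    ultimately show ?thesis by linarith
  qed
  show ?thesis
  proof (rule that)
    show "\<eta> > 0" using e eV by (simp add: \<eta>_def)
    show "M \<ge> 0" unfolding M_def g_def by (intro add_nonneg_nonneg sum_nonneg) auto
    show "\<exists>\<theta>. \<bar>\<theta>\<bar> \<le> \<bar>b\<bar> \<and> \<bar>f (r0p + a) (r0m + b) - f r0p r0m - (a * pd1 f r0p r0m + a * b * pd2 (pd1 f) r0p r0m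
        + b * pd2 f r0p r0m + b^2/2 * pd2 (pd2 f) r0p r0m + b^3/6 * pd2 (pd2 (pd2 f)) r0p (r0m + \<theta>))\<bar>
        \<le> M * (a^2 + \<bar>a\<bar> * b^2)" if "f \<in> {mp, mm, lp, lm}" "\<bar>a\<bar> < \<eta>" "\<bar>b\<bar> < \<eta>" for f a b
      using smooth_on_taylor_mixed[OF sm[OF that(1)] _ that(2,3)] box bound[OF that(1)] by blast
    show "\<bar>pd2 (pd2 (pd2 f)) r0p (r0m + \<theta>)\<bar> \<le> M" if "f \<in> {mp, mm, lp, lm}" "\<bar>\<theta>\<bar> < \<eta>" for f \<theta>
      using bound[OF that(1), of r0p "r0m + \<theta>"] that(2) \<open>\<eta> > 0\<close> by simp
  qed
qed

lemma third_derivatives_near_r0: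
  assumes "\<epsilon> > 0"
  obtains d where "d > 0" "\<And>\<theta>1 \<theta>2. \<bar>\<theta>1\<bar> < d \<Longrightarrow> \<bar>\<theta>2\<bar> < d \<Longrightarrow>
    \<bar>pd2 (pd2 (pd2 mm)) r0p (r0m + \<theta>1) - t0 * pd2 (pd2 (pd2 lm)) r0p (r0m + \<theta>2) + \<gamma>\<bar> < \<epsilon>"
proof -
  define h where "h \<theta> = pd2 (pd2 (pd2 mm)) r0p (r0m + fst \<theta>) - t0 * pd2 (pd2 (pd2 lm)) r0p (r0m + snd \<theta>) + \<gamma>"
    for \<theta> :: "real \<times> real"
  have c: "isCont (\<lambda>\<theta>. pd2 (pd2 (pd2 f)) r0p (r0m + s \<theta>)) 0"
    if "smooth_on V f" "isCont s (0 :: real \<times> real)" "s 0 = 0" for f s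
  proof -
    have outer: "isCont (\<lambda>q. pd2 (pd2 (pd2 f)) (fst q) (snd q)) (r0p, r0m + s 0)"
      using isCont_at_r0[OF that(1), of "[True, True, True]"] that(3) by simp
    have inner: "isCont (\<lambda>\<theta>. (r0p, r0m + s \<theta>)) 0"
      using that(2) by (intro continuous_intros)
    show ?thesis
      using isCont_o2[OF inner outer] by simp
  qed
  have "isCont h 0"
    unfolding h_def using c[OF mu_smooth(2), of fst] c[OF lam_smooth(2), of snd]
    by (intro continuous_intros) auto
  moreover have "h 0 = 0" by (simp add: h_def)
  ultimately obtain d where d: "d > 0" "\<And>\<theta>. dist \<theta> 0 < d \<Longrightarrow> \<bar>h \<theta>\<bar> < \<epsilon>"
    using assms unfolding continuous_at_eps_delta dist_real_def by force
  show ?thesis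
  proof (rule that[of "d/2"])
    fix \<theta>1 \<theta>2 :: real assume "\<bar>\<theta>1\<bar> < d/2" "\<bar>\<theta>2\<bar> < d/2"
    then have "dist (\<theta>1, \<theta>2) 0 < d"
      using dist_Pair_le_abs_sum[of \<theta>1 \<theta>2 0 0] by (simp add: zero_prod_def)
    then show "\<bar>pd2 (pd2 (pd2 mm)) r0p (r0m + \<theta>1) - t0 * pd2 (pd2 (pd2 lm)) r0p (r0m + \<theta>2) + \<gamma>\<bar> < \<epsilon>"
      using d(2)[of "(\<theta>1, \<theta>2)"] by (simp add: h_def)
  qed (use d in simp)
qed

end

locale catastrophe_scaling = hodograph_catastrophe +
  fixes Xp Xm :: real
  assumes Xp_nonpos: "Xp \<le> 0" and Xp_less: "Xp < Xm"
begin

definition sigma :: "real \<Rightarrow> real" where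
  "sigma \<tau> = (Xp - \<tau> * Xm) / \<Delta>"

definition path :: "real \<Rightarrow> real \<times> real" where
  "path \<tau> = (x_of (lp r0p r0m) (lm r0p r0m) x0 t0 (\<tau>^2 * Xp) (\<tau>^3 * Xm),
             t_of (lp r0p r0m) (lm r0p r0m) t0 (\<tau>^2 * Xp) (\<tau>^3 * Xm))"

definition dev_p :: "real \<Rightarrow> real" where
  "dev_p \<tau> = rP (fst (path \<tau>)) (snd (path \<tau>)) - r0p"

definition dev_m :: "real \<Rightarrow> real" where
  "dev_m \<tau> = rM (fst (path \<tau>)) (snd (path \<tau>)) - r0m"

lemma path_eq: "path \<tau> = (x0 + \<tau>^2 * Xp - lp r0p r0m * (\<tau>^2 * sigma \<tau>), t0 + \<tau>^2 * sigma \<tau>)"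
  using speeds_distinct
  by (simp add: path_def x_of_def t_of_def sigma_def field_simps power2_eq_square power3_eq_cube)

lemma fst_path_plus: "fst (path \<tau>) = x0 + \<tau>^2 * Xp - lp r0p r0m * (\<tau>^2 * sigma \<tau>)"
  and fst_path_minus: "fst (path \<tau>) = x0 + \<tau>^3 * Xm - lm r0p r0m * (\<tau>^2 * sigma \<tau>)"
  and snd_path: "snd (path \<tau>) = t0 + \<tau>^2 * sigma \<tau>"
  using speeds_distinct by (simp_all add: path_eq sigma_def field_simps power2_eq_square power3_eq_cube)

lemma sigma_tendsto: "(sigma \<longlongrightarrow> Xp / \<Delta>) (at_right 0)"
  unfolding sigma_def using speeds_distinct by (auto intro!: tendsto_eq_intros)

lemma sigma_eventually_bounded: "eventually (\<lambda>\<tau>. \<bar>sigma \<tau>\<bar> \<le> \<bar>Xp / \<Delta>\<bar> + 1) (at_right 0)"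
  using tendstoD[OF sigma_tendsto zero_less_one] by eventually_elim (simp only: dist_real_def; arith)

lemma sigma_eventually_neg: "eventually (\<lambda>\<tau>. sigma \<tau> < 0) (at_right 0)"
proof (cases "Xp < 0")
  case True
  have "((\<lambda>\<tau>. Xp - \<tau> * Xm) \<longlongrightarrow> Xp) (at_right (0::real))"
    by (auto intro!: tendsto_eq_intros)
  from order_tendstoD(2)[OF this True] show ?thesis
    by eventually_elim (use Delta_pos in \<open>simp add: sigma_def divide_neg_pos\<close>)
next
  case False
  then have "Xp = 0" "Xm > 0" using Xp_nonpos Xp_less by auto
  then show ?thesis
    unfolding sigma_def eventually_at_right_field using Delta_pos
    by (intro exI[of _ 1]) (auto simp: divide_neg_pos)
qed

lemma filterlim_path: "filterlim path (at (x0, t0) within D) (at_right 0)"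
proof -
  have lim: "(path \<longlongrightarrow> (x0, t0)) (at_right 0)"
    unfolding path_eq[abs_def] sigma_def using speeds_distinct by (auto intro!: tendsto_eq_intros)
  have "eventually (\<lambda>\<tau>. path \<tau> \<in> D \<and> path \<tau> \<noteq> (x0, t0)) (at_right 0)"
    using tendstoD[OF lim delta_pos] sigma_eventually_neg eventually_at_right_0_less[OF zero_less_one]
  proof eventually_elim
    case (elim \<tau>)
    then have "snd (path \<tau>) < t0" by (simp add: path_eq mult_pos_neg)
    then show ?case using elim by (auto simp: D_eq)
  qed
  with lim show ?thesis by (simp add: filterlim_at)
qed

lemma eventually_path_in_D: "eventually (\<lambda>\<tau>. path \<tau> \<in> D) (at_right 0)"
  using filterlim_path unfolding filterlim_at by (auto elim: eventually_mono)

lemma dev_tendsto_0: "(dev_p \<longlongrightarrow> 0) (at_right 0)" "(dev_m \<longlongrightarrow> 0) (at_right 0)"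
  using tendsto_diff[OF tendsto_r_along(1)[OF filterlim_path] tendsto_const[of r0p]]
    tendsto_diff[OF tendsto_r_along(2)[OF filterlim_path] tendsto_const[of r0m]]
  by (simp_all add: dev_p_def[abs_def] dev_m_def[abs_def])

lemma continuous_on_dev_m_quotient:
  obtains T where "T > 0" "continuous_on {0<..<T} (\<lambda>\<tau>. dev_m \<tau> / \<tau>)"
proof -
  obtain T where T: "T > 0" "\<And>\<tau>. 0 < \<tau> \<Longrightarrow> \<tau> < T \<Longrightarrow> path \<tau> \<in> D"
    using eventually_path_in_D unfolding eventually_at_right_field by auto
  have "continuous_on UNIV path"
    unfolding path_eq[abs_def] sigma_def using speeds_distinct by (intro continuous_intros) auto
  then have "continuous_on {0<..<T} (\<lambda>\<tau>. rM (fst (path \<tau>)) (snd (path \<tau>)))"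
    using T(2) by (intro continuous_on_compose2[OF rM_cont]) (auto intro: continuous_on_subset)
  then have "continuous_on {0<..<T} (\<lambda>\<tau>. dev_m \<tau> / \<tau>)"
    unfolding dev_m_def by (intro continuous_intros) auto
  with T(1) show ?thesis by (rule that)
qed

lemma hodograph_differences:
  assumes "path \<tau> \<in> D"
  defines "p \<equiv> r0p + dev_p \<tau>" and "q \<equiv> r0m + dev_m \<tau>"
  shows "\<tau>^2 * Xp = (mp p q - mp r0p r0m) - t0 * (lp p q - lp r0p r0m) - (lp p q - lp r0p r0m) * (\<tau>^2 * sigma \<tau>)"
    and "\<tau>^3 * Xm = (mm p q - mm r0p r0m) - t0 * (lm p q - lm r0p r0m) - (lm p q - lm r0p r0m) * (\<tau>^2 * sigma \<tau>)"
proof -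
  have pq: "p = rP (fst (path \<tau>)) (snd (path \<tau>))" "q = rM (fst (path \<tau>)) (snd (path \<tau>))"
    by (simp_all add: p_def q_def dev_p_def dev_m_def)
  have h: "fst (path \<tau>) + lp p q * snd (path \<tau>) = mp p q" "fst (path \<tau>) + lm p q * snd (path \<tau>) = mm p q"
    using hodograph assms(1) unfolding pq by (auto simp: case_prod_beta)
  show "\<tau>^2 * Xp = (mp p q - mp r0p r0m) - t0 * (lp p q - lp r0p r0m) - (lp p q - lp r0p r0m) * (\<tau>^2 * sigma \<tau>)"
    by (rule hodograph_difference_identity[OF h(1) hodograph_at_r0(1) snd_path fst_path_plus])
  show "\<tau>^3 * Xm = (mm p q - mm r0p r0m) - t0 * (lm p q - lm r0p r0m) - (lm p q - lm r0p r0m) * (\<tau>^2 * sigma \<tau>)"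
    by (rule hodograph_difference_identity[OF h(2) hodograph_at_r0(2) snd_path fst_path_minus])
qed

lemma eventually_small_deviations:
  assumes "e > 0"
  shows "eventually (\<lambda>\<tau>. path \<tau> \<in> D \<and> \<bar>dev_p \<tau>\<bar> < e \<and> \<bar>dev_m \<tau>\<bar> < e \<and> \<bar>sigma \<tau>\<bar> \<le> \<bar>Xp / \<Delta>\<bar> + 1 \<and> 0 < \<tau>) (at_right 0)"
  using eventually_path_in_D tendsto_0_eventually_abs_less[OF dev_tendsto_0(1) assms]
    tendsto_0_eventually_abs_less[OF dev_tendsto_0(2) assms] sigma_eventually_bounded
    eventually_at_right_0_less[OF zero_less_one]
  by eventually_elim auto

lemma plus_equation_asymptotics:
  obtains K where "K \<ge> 0"
    "eventually (\<lambda>\<tau>. \<bar>\<tau>^2 * Xp - \<alpha> * dev_p \<tau>\<bar> \<le> K * (\<bar>dev_p \<tau>\<bar> * \<bar>dev_m \<tau>\<bar> + \<bar>dev_m \<tau>\<bar>^3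
       + (dev_p \<tau>)^2 + \<bar>dev_p \<tau>\<bar> * (dev_m \<tau>)^2 + \<tau>^2 * (\<bar>dev_p \<tau>\<bar> + \<bar>dev_m \<tau>\<bar>))) (at_right 0)"
proof -
  obtain \<eta> M where \<eta>: "\<eta> > 0" "M \<ge> 0"
    and expand: "\<And>f a b. f \<in> {mp, mm, lp, lm} \<Longrightarrow> \<bar>a\<bar> < \<eta> \<Longrightarrow> \<bar>b\<bar> < \<eta> \<Longrightarrow>
      \<exists>\<theta>. \<bar>\<theta>\<bar> \<le> \<bar>b\<bar> \<and> \<bar>f (r0p + a) (r0m + b) - f r0p r0m - (a * pd1 f r0p r0m + a * b * pd2 (pd1 f) r0p r0m
        + b * pd2 f r0p r0m + b^2/2 * pd2 (pd2 f) r0p r0m + b^3/6 * pd2 (pd2 (pd2 f)) r0p (r0m + \<theta>))\<bar>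
        \<le> M * (a^2 + \<bar>a\<bar> * b^2)"
    and bound3: "\<And>f \<theta>. f \<in> {mp, mm, lp, lm} \<Longrightarrow> \<bar>\<theta>\<bar> < \<eta> \<Longrightarrow> \<bar>pd2 (pd2 (pd2 f)) r0p (r0m + \<theta>)\<bar> \<le> M"
    using taylor_expansion_at_r0 by blast
  define S where "S = \<bar>Xp / \<Delta>\<bar> + 1"
  define K where "K = \<bar>pd2 (pd1 mp) r0p r0m\<bar> + \<bar>t0\<bar> * \<bar>pd2 (pd1 lp) r0p r0m\<bar> + M + \<bar>t0\<bar> * M
    + (\<bar>pd1 lp r0p r0m\<bar> + \<bar>pd2 (pd1 lp) r0p r0m\<bar> + \<bar>pd2 lp r0p r0m\<bar> + \<bar>pd2 (pd2 lp) r0p r0m\<bar> + 3 * M) * S"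
  have \<eta>1: "min \<eta> 1 > 0" using \<eta> by simp
  show ?thesis
  proof (rule that)
    show "K \<ge> 0" using \<eta> by (simp add: K_def S_def)
    show "eventually (\<lambda>\<tau>. \<bar>\<tau>^2 * Xp - \<alpha> * dev_p \<tau>\<bar> \<le> K * (\<bar>dev_p \<tau>\<bar> * \<bar>dev_m \<tau>\<bar> + \<bar>dev_m \<tau>\<bar>^3
       + (dev_p \<tau>)^2 + \<bar>dev_p \<tau>\<bar> * (dev_m \<tau>)^2 + \<tau>^2 * (\<bar>dev_p \<tau>\<bar> + \<bar>dev_m \<tau>\<bar>))) (at_right 0)"
      using eventually_small_deviations[OF \<eta>1]
    proof eventually_elim
      case (elim \<tau>)
      then have small: "\<bar>dev_p \<tau>\<bar> < \<eta>" "\<bar>dev_m \<tau>\<bar> < \<eta>" "\<bar>dev_p \<tau>\<bar> \<le> 1" "\<bar>dev_m \<tau>\<bar> \<le> 1" by auto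
      obtain \<theta>1 \<theta>2 where \<theta>: "\<bar>\<theta>1\<bar> \<le> \<bar>dev_m \<tau>\<bar>" "\<bar>\<theta>2\<bar> \<le> \<bar>dev_m \<tau>\<bar>"
        and emp: "\<bar>mp (r0p + dev_p \<tau>) (r0m + dev_m \<tau>) - mp r0p r0m - (dev_p \<tau> * pd1 mp r0p r0m + dev_p \<tau> * dev_m \<tau> * pd2 (pd1 mp) r0p r0m
            + dev_m \<tau> * pd2 mp r0p r0m + (dev_m \<tau>)^2/2 * pd2 (pd2 mp) r0p r0m + (dev_m \<tau>)^3/6 * pd2 (pd2 (pd2 mp)) r0p (r0m + \<theta>1))\<bar>
          \<le> M * ((dev_p \<tau>)^2 + \<bar>dev_p \<tau>\<bar> * (dev_m \<tau>)^2)"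
        and elp: "\<bar>lp (r0p + dev_p \<tau>) (r0m + dev_m \<tau>) - lp r0p r0m - (dev_p \<tau> * pd1 lp r0p r0m + dev_p \<tau> * dev_m \<tau> * pd2 (pd1 lp) r0p r0m
            + dev_m \<tau> * pd2 lp r0p r0m + (dev_m \<tau>)^2/2 * pd2 (pd2 lp) r0p r0m + (dev_m \<tau>)^3/6 * pd2 (pd2 (pd2 lp)) r0p (r0m + \<theta>2))\<bar>
          \<le> M * ((dev_p \<tau>)^2 + \<bar>dev_p \<tau>\<bar> * (dev_m \<tau>)^2)"
        using expand[of mp "dev_p \<tau>" "dev_m \<tau>"] expand[of lp "dev_p \<tau>" "dev_m \<tau>"] small by auto
      have "\<bar>pd2 (pd2 (pd2 mp)) r0p (r0m + \<theta>1)\<bar> \<le> M" "\<bar>pd2 (pd2 (pd2 lp)) r0p (r0m + \<theta>2)\<bar> \<le> M"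
        using bound3[of mp \<theta>1] bound3[of lp \<theta>2] \<theta> small by simp_all
      from plus_equation_estimate[OF emp elp this compatibility_first_order(1) compatibility_second_order(1)
          small(3,4) _ hodograph_differences(1)[of \<tau>]] elim
      show ?case unfolding K_def S_def by blast
    qed
  qed
qed

lemma minus_equation_asymptotics:
  obtains K where "K \<ge> 0"
    "\<And>\<epsilon>. \<epsilon> > 0 \<Longrightarrow> eventually (\<lambda>\<tau>. \<bar>\<tau>^3 * Xm - (-\<gamma>/6 * (dev_m \<tau>)^3 - pd2 lm r0p r0m * dev_m \<tau> * \<tau>^2 * sigma \<tau>)\<bar>
       \<le> \<epsilon> * \<bar>dev_m \<tau>\<bar>^3 + K * ((dev_p \<tau>)^2 + \<bar>dev_p \<tau>\<bar> * (dev_m \<tau>)^2 + \<tau>^2 * (\<bar>dev_p \<tau>\<bar> + (dev_m \<tau>)^2))) (at_right 0)"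
proof -
  obtain \<eta> M where \<eta>: "\<eta> > 0" "M \<ge> 0"
    and expand: "\<And>f a b. f \<in> {mp, mm, lp, lm} \<Longrightarrow> \<bar>a\<bar> < \<eta> \<Longrightarrow> \<bar>b\<bar> < \<eta> \<Longrightarrow>
      \<exists>\<theta>. \<bar>\<theta>\<bar> \<le> \<bar>b\<bar> \<and> \<bar>f (r0p + a) (r0m + b) - f r0p r0m - (a * pd1 f r0p r0m + a * b * pd2 (pd1 f) r0p r0m
        + b * pd2 f r0p r0m + b^2/2 * pd2 (pd2 f) r0p r0m + b^3/6 * pd2 (pd2 (pd2 f)) r0p (r0m + \<theta>))\<bar>
        \<le> M * (a^2 + \<bar>a\<bar> * b^2)"
    and bound3: "\<And>f \<theta>. f \<in> {mp, mm, lp, lm} \<Longrightarrow> \<bar>\<theta>\<bar> < \<eta> \<Longrightarrow> \<bar>pd2 (pd2 (pd2 f)) r0p (r0m + \<theta>)\<bar> \<le> M"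
    using taylor_expansion_at_r0 by blast
  define S where "S = \<bar>Xp / \<Delta>\<bar> + 1"
  define K where "K = (1 + \<bar>t0\<bar>) * M + (\<bar>pd1 lm r0p r0m\<bar> + \<bar>pd2 (pd1 lm) r0p r0m\<bar> + \<bar>pd2 (pd2 lm) r0p r0m\<bar> + 3 * M) * S"
  show ?thesis
  proof (rule that)
    show "K \<ge> 0" using \<eta> by (simp add: K_def S_def)
    fix \<epsilon> :: real assume "\<epsilon> > 0"
    then obtain d where d: "d > 0" "\<And>\<theta>1 \<theta>2. \<bar>\<theta>1\<bar> < d \<Longrightarrow> \<bar>\<theta>2\<bar> < d \<Longrightarrow>
        \<bar>pd2 (pd2 (pd2 mm)) r0p (r0m + \<theta>1) - t0 * pd2 (pd2 (pd2 lm)) r0p (r0m + \<theta>2) + \<gamma>\<bar> < 6 * \<epsilon>"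
      using third_derivatives_near_r0[of "6 * \<epsilon>"] by auto
    have \<eta>d: "min (min \<eta> 1) d > 0" using \<eta> d(1) by simp
    show "eventually (\<lambda>\<tau>. \<bar>\<tau>^3 * Xm - (-\<gamma>/6 * (dev_m \<tau>)^3 - pd2 lm r0p r0m * dev_m \<tau> * \<tau>^2 * sigma \<tau>)\<bar>
       \<le> \<epsilon> * \<bar>dev_m \<tau>\<bar>^3 + K * ((dev_p \<tau>)^2 + \<bar>dev_p \<tau>\<bar> * (dev_m \<tau>)^2 + \<tau>^2 * (\<bar>dev_p \<tau>\<bar> + (dev_m \<tau>)^2))) (at_right 0)"
      using eventually_small_deviations[OF \<eta>d]
    proof eventually_elim
      case (elim \<tau>)
      then have small: "\<bar>dev_p \<tau>\<bar> < \<eta>" "\<bar>dev_m \<tau>\<bar> < \<eta>" "\<bar>dev_p \<tau>\<bar> \<le> 1" "\<bar>dev_m \<tau>\<bar> \<le> 1" "\<bar>dev_m \<tau>\<bar> < d" by auto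
      obtain \<theta>1 \<theta>2 where \<theta>: "\<bar>\<theta>1\<bar> \<le> \<bar>dev_m \<tau>\<bar>" "\<bar>\<theta>2\<bar> \<le> \<bar>dev_m \<tau>\<bar>"
        and emm: "\<bar>mm (r0p + dev_p \<tau>) (r0m + dev_m \<tau>) - mm r0p r0m - (dev_p \<tau> * pd1 mm r0p r0m + dev_p \<tau> * dev_m \<tau> * pd2 (pd1 mm) r0p r0m
            + dev_m \<tau> * pd2 mm r0p r0m + (dev_m \<tau>)^2/2 * pd2 (pd2 mm) r0p r0m + (dev_m \<tau>)^3/6 * pd2 (pd2 (pd2 mm)) r0p (r0m + \<theta>1))\<bar>
          \<le> M * ((dev_p \<tau>)^2 + \<bar>dev_p \<tau>\<bar> * (dev_m \<tau>)^2)"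
        and elm: "\<bar>lm (r0p + dev_p \<tau>) (r0m + dev_m \<tau>) - lm r0p r0m - (dev_p \<tau> * pd1 lm r0p r0m + dev_p \<tau> * dev_m \<tau> * pd2 (pd1 lm) r0p r0m
            + dev_m \<tau> * pd2 lm r0p r0m + (dev_m \<tau>)^2/2 * pd2 (pd2 lm) r0p r0m + (dev_m \<tau>)^3/6 * pd2 (pd2 (pd2 lm)) r0p (r0m + \<theta>2))\<bar>
          \<le> M * ((dev_p \<tau>)^2 + \<bar>dev_p \<tau>\<bar> * (dev_m \<tau>)^2)"
        using expand[of mm "dev_p \<tau>" "dev_m \<tau>"] expand[of lm "dev_p \<tau>" "dev_m \<tau>"] small by auto
      have third: "\<bar>pd2 (pd2 (pd2 mm)) r0p (r0m + \<theta>1) - t0 * pd2 (pd2 (pd2 lm)) r0p (r0m + \<theta>2) + \<gamma>\<bar> \<le> 6 * \<epsilon>"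
        using d(2)[of \<theta>1 \<theta>2] \<theta> small by simp
      have "\<bar>pd2 (pd2 (pd2 lm)) r0p (r0m + \<theta>2)\<bar> \<le> M"
        using bound3[of lm \<theta>2] \<theta> small by simp
      from minus_equation_estimate[OF emm elm this compatibility_first_order(2) compatibility_second_order(2)
          catastrophe_conditions small(3,4) _ third hodograph_differences(2)[of \<tau>]] elim
      show ?case unfolding K_def S_def by blast
    qed
  qed
qed

lemma deviation_orders:
  obtains C N where "C \<ge> 0" "N \<ge> 1"
    "eventually (\<lambda>\<tau>. \<bar>dev_p \<tau>\<bar> \<le> C * \<tau>^2) (at_right 0)"
    "eventually (\<lambda>\<tau>. \<bar>dev_m \<tau>\<bar> \<le> N * \<tau>) (at_right 0)"
proof -
  obtain Kp where Kp: "Kp \<ge> 0"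
    "eventually (\<lambda>\<tau>. \<bar>\<tau>^2 * Xp - \<alpha> * dev_p \<tau>\<bar> \<le> Kp * (\<bar>dev_p \<tau>\<bar> * \<bar>dev_m \<tau>\<bar> + \<bar>dev_m \<tau>\<bar>^3
       + (dev_p \<tau>)^2 + \<bar>dev_p \<tau>\<bar> * (dev_m \<tau>)^2 + \<tau>^2 * (\<bar>dev_p \<tau>\<bar> + \<bar>dev_m \<tau>\<bar>))) (at_right 0)"
    using plus_equation_asymptotics by blast
  obtain Km where Km: "Km \<ge> 0"
    "\<And>\<epsilon>. \<epsilon> > 0 \<Longrightarrow> eventually (\<lambda>\<tau>. \<bar>\<tau>^3 * Xm - (-\<gamma>/6 * (dev_m \<tau>)^3 - pd2 lm r0p r0m * dev_m \<tau> * \<tau>^2 * sigma \<tau>)\<bar>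
       \<le> \<epsilon> * \<bar>dev_m \<tau>\<bar>^3 + Km * ((dev_p \<tau>)^2 + \<bar>dev_p \<tau>\<bar> * (dev_m \<tau>)^2 + \<tau>^2 * (\<bar>dev_p \<tau>\<bar> + (dev_m \<tau>)^2))) (at_right 0)"
    using minus_equation_asymptotics by blast
  obtain C where C: "C \<ge> 0" "eventually (\<lambda>\<tau>. \<bar>dev_p \<tau>\<bar> \<le> C * (\<tau>^2 + \<bar>dev_m \<tau>\<bar>^3)) (at_right 0)"
    using plus_equation_deviation_bound[OF gen2 Kp(1) dev_tendsto_0 Kp(2)] by blast
  have "\<gamma> \<noteq> 0" using gen3 by simp
  from minus_equation_linear_bound[OF this Km(1) C(1) _ dev_tendsto_0(2) C(2) Km(2) sigma_eventually_bounded]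
  obtain N where N: "N \<ge> 1" "eventually (\<lambda>\<tau>. \<bar>dev_m \<tau>\<bar> \<le> N * \<tau>) (at_right 0)"
    by auto
  show ?thesis
    using that[OF _ N(1) plus_equation_quadratic_bound[OF C(1) N(1) C(2) N(2)] N(2)] C(1) N(1) by simp
qed

lemma dev_p_scaled_limit: "((\<lambda>\<tau>. dev_p \<tau> / \<tau>^2) \<longlongrightarrow> Xp / \<alpha>) (at_right 0)"
proof -
  obtain K where K: "K \<ge> 0"
    "eventually (\<lambda>\<tau>. \<bar>\<tau>^2 * Xp - \<alpha> * dev_p \<tau>\<bar> \<le> K * (\<bar>dev_p \<tau>\<bar> * \<bar>dev_m \<tau>\<bar> + \<bar>dev_m \<tau>\<bar>^3
       + (dev_p \<tau>)^2 + \<bar>dev_p \<tau>\<bar> * (dev_m \<tau>)^2 + \<tau>^2 * (\<bar>dev_p \<tau>\<bar> + \<bar>dev_m \<tau>\<bar>))) (at_right 0)"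
    using plus_equation_asymptotics by blast
  obtain C N where "C \<ge> 0" "N \<ge> 1"
    "eventually (\<lambda>\<tau>. \<bar>dev_p \<tau>\<bar> \<le> C * \<tau>^2) (at_right 0)" "eventually (\<lambda>\<tau>. \<bar>dev_m \<tau>\<bar> \<le> N * \<tau>) (at_right 0)"
    by (rule deviation_orders)
  from plus_equation_limit[OF gen2 K(1) this K(2)] show ?thesis .
qed

lemma dev_m_scaled_limit:
  obtains R where "((\<lambda>\<tau>. dev_m \<tau> / \<tau>) \<longlongrightarrow> R) (at_right 0)" "Xm = \<beta> * Xp * R - \<gamma> * R^3 / 6"
proof -
  obtain K where K: "K \<ge> 0"
    "\<And>\<epsilon>. \<epsilon> > 0 \<Longrightarrow> eventually (\<lambda>\<tau>. \<bar>\<tau>^3 * Xm - (-\<gamma>/6 * (dev_m \<tau>)^3 - pd2 lm r0p r0m * dev_m \<tau> * \<tau>^2 * sigma \<tau>)\<bar>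
       \<le> \<epsilon> * \<bar>dev_m \<tau>\<bar>^3 + K * ((dev_p \<tau>)^2 + \<bar>dev_p \<tau>\<bar> * (dev_m \<tau>)^2 + \<tau>^2 * (\<bar>dev_p \<tau>\<bar> + (dev_m \<tau>)^2))) (at_right 0)"
    using minus_equation_asymptotics by blast
  obtain C N where CN: "C \<ge> 0" "N \<ge> 1"
    "eventually (\<lambda>\<tau>. \<bar>dev_p \<tau>\<bar> \<le> C * \<tau>^2) (at_right 0)" "eventually (\<lambda>\<tau>. \<bar>dev_m \<tau>\<bar> \<le> N * \<tau>) (at_right 0)"
    by (rule deviation_orders)
  define P where "P y = -\<gamma>/6 * y^3 - pd2 lm r0p r0m * (Xp / \<Delta>) * y" for y
  have lim: "((\<lambda>\<tau>. P (dev_m \<tau> / \<tau>)) \<longlongrightarrow> Xm) (at_right 0)"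
    unfolding P_def by (rule minus_equation_limit[OF K(1) CN K(2) sigma_tendsto])
  have level_set: "{y. P y = Xm} = {y. poly [:-Xm, - pd2 lm r0p r0m * (Xp / \<Delta>), 0, -\<gamma>/6:] y = 0}"
    by (auto simp: P_def algebra_simps power3_eq_cube)
  have "[:-Xm, - pd2 lm r0p r0m * (Xp / \<Delta>), 0, -\<gamma>/6:] \<noteq> 0"
    using gen3 by simp
  then have fin: "finite {y. P y = Xm}"
    unfolding level_set by (rule poly_roots_finite)
  obtain T where T: "T > 0" "continuous_on {0<..<T} (\<lambda>\<tau>. dev_m \<tau> / \<tau>)"
    by (rule continuous_on_dev_m_quotient)
  have bounded: "eventually (\<lambda>\<tau>. \<bar>dev_m \<tau> / \<tau>\<bar> \<le> N) (at_right 0)"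
    using CN(4) eventually_at_right_0_less[OF zero_less_one]
    by eventually_elim (simp add: abs_divide field_simps)
  have "continuous_on UNIV P"
    unfolding P_def by (intro continuous_intros)
  from tendsto_level_point[OF this fin T(2,1) bounded lim]
  obtain R where R: "((\<lambda>\<tau>. dev_m \<tau> / \<tau>) \<longlongrightarrow> R) (at_right 0)" "P R = Xm"
    by blast
  from R(2) have "Xm = \<beta> * Xp * R - \<gamma> * R^3 / 6"
    using Delta_nonzero by (simp add: P_def field_simps)
  with R(1) show ?thesis by (rule that)
qed

end

lemma (in hodograph_catastrophe) rescaled_limits:
  assumes "Xp < Xm"
  defines "S \<equiv> {k. 0 < k \<and> (k powr (2/3) * Xp - k * Xm) / \<Delta> < 0}"
  shows "\<exists>RP RM.
    ((\<lambda>k. k powr (-2/3) * (rP (x_of (lp r0p r0m) (lm r0p r0m) x0 t0 (k powr (2/3) * Xp) (k * Xm))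
        (t_of (lp r0p r0m) (lm r0p r0m) t0 (k powr (2/3) * Xp) (k * Xm)) - r0p)) \<longlongrightarrow> RP) (at 0 within S) \<and>
    ((\<lambda>k. k powr (-1/3) * (rM (x_of (lp r0p r0m) (lm r0p r0m) x0 t0 (k powr (2/3) * Xp) (k * Xm))
        (t_of (lp r0p r0m) (lm r0p r0m) t0 (k powr (2/3) * Xp) (k * Xm)) - r0m)) \<longlongrightarrow> RM) (at 0 within S) \<and>
    Xp = \<alpha> * RP \<and> Xm = \<beta> * Xp * RM - \<gamma> * RM ^ 3 / 6"
proof (cases "Xp > 0")
  case True
  \<comment> \<open>Then the admissible k do not accumulate at 0 (they correspond to t > t0), so both limits
    hold vacuously and only the cubic relation needs a witness.\<close>
  have "\<gamma> \<noteq> 0" using gen3 by simp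
  then obtain RM where "Xm = \<beta> * Xp * RM - \<gamma> * RM ^ 3 / 6"
    using depressed_cubic_has_root by blast
  then show ?thesis
    using scaling_region_empty_near_0[OF True Delta_pos] gen2 unfolding S_def
    by (intro exI[of _ "Xp / \<alpha>"] exI[of _ RM]) simp
next
  case False
  interpret catastrophe_scaling lp lm mp mm V D rP rM x0 t0 \<delta> r0p r0m Xp Xm
    using False assms(1) by (intro catastrophe_scaling.intro catastrophe_scaling_axioms.intro hodograph_catastrophe_axioms) auto
  have S: "S \<subseteq> {0<..}" by (auto simp: S_def)
  obtain RM where RM: "((\<lambda>\<tau>. dev_m \<tau> / \<tau>) \<longlongrightarrow> RM) (at_right 0)" "Xm = \<beta> * Xp * RM - \<gamma> * RM^3 / 6"
    by (rule dev_m_scaled_limit)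
  have "((\<lambda>k. k powr (-2/3) * (rP (x_of (lp r0p r0m) (lm r0p r0m) x0 t0 (k powr (2/3) * Xp) (k * Xm))
      (t_of (lp r0p r0m) (lm r0p r0m) t0 (k powr (2/3) * Xp) (k * Xm)) - r0p)) \<longlongrightarrow> Xp / \<alpha>) (at 0 within S)"
    by (rule tendsto_within_cube_substitution[OF dev_p_scaled_limit S])
      (simp add: dev_p_def path_def cube_powr_thirds)
  moreover have "((\<lambda>k. k powr (-1/3) * (rM (x_of (lp r0p r0m) (lm r0p r0m) x0 t0 (k powr (2/3) * Xp) (k * Xm))
      (t_of (lp r0p r0m) (lm r0p r0m) t0 (k powr (2/3) * Xp) (k * Xm)) - r0m)) \<longlongrightarrow> RM) (at 0 within S)"
    by (rule tendsto_within_cube_substitution[OF RM(1) S])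
      (simp add: dev_m_def path_def cube_powr_thirds)
  ultimately show ?thesis
    using RM(2) gen2 by (intro exI[of _ "Xp / \<alpha>"] exI[of _ RM] conjI) simp_all
qed

theorem mainTheorem2:
  fixes h Rp Rm kp km :: "real \<Rightarrow> real \<Rightarrow> real"
    and U :: "(real \<times> real) set"
    and lp lm mp mm :: "real \<Rightarrow> real \<Rightarrow> real"
    and u v rP rM :: "real \<Rightarrow> real \<Rightarrow> real"
    and x0 t0 \<delta> r0p r0m :: real
  defines "V \<equiv> (\<lambda>p. (Rp (fst p) (snd p), Rm (fst p) (snd p))) ` U"
    and "D \<equiv> {p. dist p (x0, t0) < \<delta> \<and> snd p < t0}"
  assumes U_open: "open U"
    and h_smooth: "smooth_on U h"
    and h_hyp: "\<forall>(a, b)\<in>U. pd1 (pd1 h) a b * pd2 (pd2 h) a b > 0"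
    \<comment> \<open>Riemann invariants and integrating factors\<close>
    and R_smooth: "smooth_on U Rp" "smooth_on U Rm"
    and R_inj: "inj_on (\<lambda>p. (Rp (fst p) (snd p), Rm (fst p) (snd p))) U"
    and R_grad: "\<forall>(a, b)\<in>U. kp a b \<noteq> 0 \<and> km a b \<noteq> 0 \<and>
        pd1 Rp a b = kp a b * sqrt (pd1 (pd1 h) a b) \<and>
        pd2 Rp a b = kp a b * sqrt (pd2 (pd2 h) a b) \<and>
        pd1 Rm a b = km a b * (- sqrt (pd1 (pd1 h) a b)) \<and>
        pd2 Rm a b = km a b * sqrt (pd2 (pd2 h) a b)"
    \<comment> \<open>characteristic speeds as functions of the Riemann invariants\<close>
    and lam_def: "\<forall>(a, b)\<in>U.
        lp (Rp a b) (Rm a b) = pd1 (pd2 h) a b + sqrt (pd1 (pd1 h) a b * pd2 (pd2 h) a b) \<and>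
        lm (Rp a b) (Rm a b) = pd1 (pd2 h) a b - sqrt (pd1 (pd1 h) a b * pd2 (pd2 h) a b)"
    and lam_smooth: "smooth_on V lp" "smooth_on V lm"
    \<comment> \<open>hodograph functions\<close>
    and mu_smooth: "smooth_on V mp" "smooth_on V mm"
    and mu_eqs: "\<forall>(a, b)\<in>V.
        pd2 mp a b = (mp a b - mm a b) / (lp a b - lm a b) * pd2 lp a b \<and>
        pd1 mm a b = (mp a b - mm a b) / (lp a b - lm a b) * pd1 lm a b"
    \<comment> \<open>the solution for t < t0 near (x0,t0)\<close>
    and delta_pos: "\<delta> > 0"
    and uv_smooth: "smooth_on D u" "smooth_on D v"
    and uv_in: "\<forall>(x, t)\<in>D. (u x t, v x t) \<in> U"
    and system: "\<forall>(x, t)\<in>D.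
        pd2 u x t = pd1 (pd2 h) (u x t) (v x t) * pd1 u x t + pd2 (pd2 h) (u x t) (v x t) * pd1 v x t \<and>
        pd2 v x t = pd1 (pd1 h) (u x t) (v x t) * pd1 u x t + pd1 (pd2 h) (u x t) (v x t) * pd1 v x t"
    and r_def: "\<forall>(x, t)\<in>D. rP x t = Rp (u x t) (v x t) \<and> rM x t = Rm (u x t) (v x t)"
    and hodograph: "\<forall>(x, t)\<in>D.
        x + lp (rP x t) (rM x t) * t = mp (rP x t) (rM x t) \<and>
        x + lm (rP x t) (rM x t) * t = mm (rP x t) (rM x t)"
    \<comment> \<open>limiting values at the catastrophe point\<close>
    and r0_in: "(r0p, r0m) \<in> V"
    and r_lim: "((\<lambda>p. rP (fst p) (snd p)) \<longlongrightarrow> r0p) (at (x0, t0) within D)"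
               "((\<lambda>p. rM (fst p) (snd p)) \<longlongrightarrow> r0m) (at (x0, t0) within D)"
    \<comment> \<open>gradient catastrophe of r_-\<close>
    and blowup: "filterlim (\<lambda>p. \<bar>pd1 rM (fst p) (snd p)\<bar>) at_top (at (x0, t0) within D)"
    and bounded: "\<exists>B. eventually (\<lambda>p. \<bar>pd1 rP (fst p) (snd p)\<bar> \<le> B) (at (x0, t0) within D)"
    and cat1: "pd2 mm r0p r0m - t0 * pd2 lm r0p r0m = 0"
    and cat2: "pd2 (pd2 mm) r0p r0m - t0 * pd2 (pd2 lm) r0p r0m = 0"
    \<comment> \<open>genericity\<close>
    and gen1: "pd2 lm r0p r0m \<noteq> 0"
    and gen2: "pd1 mp r0p r0m - t0 * pd1 lp r0p r0m \<noteq> 0"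
    and gen3: "pd2 (pd2 (pd2 mm)) r0p r0m - t0 * pd2 (pd2 (pd2 lm)) r0p r0m \<noteq> 0"
  shows "\<exists>\<epsilon>>0. \<forall>Xp Xm. \<bar>Xp\<bar> < \<epsilon> \<and> \<bar>Xm\<bar> < \<epsilon> \<and>
            (Xp - Xm) / (lp r0p r0m - lm r0p r0m) < 0 \<longrightarrow>
          (let lp0 = lp r0p r0m; lm0 = lm r0p r0m;
               \<alpha> = pd1 mp r0p r0m - t0 * pd1 lp r0p r0m;
               \<beta> = - pd2 lm r0p r0m / (lp0 - lm0);
               \<gamma> = - pd2 (pd2 (pd2 mm)) r0p r0m + t0 * pd2 (pd2 (pd2 lm)) r0p r0m;
               F = at 0 within {k. 0 < k \<and> (k powr (2/3) * Xp - k * Xm) / (lp0 - lm0) < 0}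
           in \<exists>RP RM.
             ((\<lambda>k. k powr (-2/3) *
                 (rP (x_of lp0 lm0 x0 t0 (k powr (2/3) * Xp) (k * Xm))
                     (t_of lp0 lm0 t0 (k powr (2/3) * Xp) (k * Xm)) - r0p)) \<longlongrightarrow> RP) F \<and>
             ((\<lambda>k. k powr (-1/3) *
                 (rM (x_of lp0 lm0 x0 t0 (k powr (2/3) * Xp) (k * Xm))
                     (t_of lp0 lm0 t0 (k powr (2/3) * Xp) (k * Xm)) - r0m)) \<longlongrightarrow> RM) F \<and>
             Xp = \<alpha> * RP \<and>
             Xm = \<beta> * Xp * RM - \<gamma> * RM ^ 3 / 6)"
proof -
  have V_open: "open V"
    unfolding V_def using R_inj
    by (intro invariance_of_domain[OF _ U_open] continuous_on_Pair smooth_on_continuous_on R_smooth)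
  have speeds: "lm r0p r0m < lp r0p r0m"
  proof -
    obtain a b where "(a, b) \<in> U" "r0p = Rp a b" "r0m = Rm a b"
      using r0_in unfolding V_def by auto
    moreover from this(1) have "0 < sqrt (pd1 (pd1 h) a b * pd2 (pd2 h) a b)"
      using h_hyp by auto
    ultimately show ?thesis using lam_def by auto
  qed
  have rM_cont: "continuous_on D (\<lambda>p. rM (fst p) (snd p))"
    by (rule continuous_on_eq[OF smooth_on_continuous_on_compose[OF R_smooth(2) uv_smooth uv_in]])
      (use r_def in auto)
  interpret hodograph_catastrophe lp lm mp mm V D rP rM x0 t0 \<delta> r0p r0m
    by (unfold_locales; (rule V_open speeds rM_cont assms)?) (simp add: D_def)
  show ?thesis
    unfolding Let_def
    by (intro exI[of _ 1] conjI zero_less_one allI impI rescaled_limits)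
      (use Delta_pos in \<open>auto simp: divide_less_0_iff\<close>)
qed

end
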